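(* Let $\mathbf{A}\in\mathbb{R}^{n\times d}$ and let $\mathbf{B}\in\mathbb{R}^{n\times d_B}$ have rank $m$. Let $\mathbf{B}\mathbf{B}^{\rm T}=\mathbf{U}\boldsymbol\Sigma\mathbf{U}^{\rm T}$ with $\mathbf{U}\in\mathbb{R}^{n\times m}$, $\mathbf{U}^{\rm T}\mathbf{U}=\mathbf{I}_m$, $\boldsymbol\Sigma=\mathrm{diag}(b_1,\dots,b_m)$, $b_i>0$. Then for each integer $k\in[1,m]$, $$P_k(x;\mathbf{B}\mathbf{B}^\dagger\mathbf{A},\mathbf{B})=\frac{x^{d+k-m}}{k!}\Big(\prod_{i=1}^m\partial_{z_i}\Big)\Big(h_k(z_1,\dots,z_m)\det[\mathbf{Z}-\mathbf{U}^{\rm T}\mathbf{A}\mathbf{A}^{\rm T}\mathbf{U}]\Big)\Big|_{z_i=x/2\ \forall i\in[m]},$$ where $\mathbf{Z}=\mathrm{diag}(z_1,\dots,z_m)$ and $$h_k(z_1,\dots,z_m)=(b_1\partial_{z_1}+\cdots+b_m\partial_{z_m})^k\prod_{i=1}^m z_i=k!\sum_{S\subset[m],|S|=m-k}\mathbf{b}^{S^C}\mathbf{Z}^S.$$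
   Context: For $S\subset[m]$: $\mathbf{b}^S=\prod_{i\in S}b_i$, $\mathbf{Z}^S=\prod_{i\in S}z_i$, $S^C=[m]\setminus S$. $\mathbf{B}_{:,S}$ is the column submatrix indexed by $S$; $\mathbf{M}^\dagger$ is the Moore–Penrose pseudoinverse with $\mathbf{B}_{:,S}^\dagger:=(\mathbf{B}_{:,S})^\dagger$. For $\mathbf{A}'\in\mathbb{R}^{n\times d}$, $P_k(x;\mathbf{A}',\mathbf{B})=\sum_{S\subset[d_B],|S|=k}\det[(\mathbf{B}_{:,S})^{\rm T}\mathbf{B}_{:,S}]\det[x\mathbf{I}_d-\mathbf{A}'^{\rm T}(\mathbf{I}_n-\mathbf{B}_{:,S}\mathbf{B}_{:,S}^\dagger)\mathbf{A}']$. *)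

theory Defs
  imports "HOL-Analysis.Derivative" "Jordan_Normal_Form.DL_Rank" "Jordan_Normal_Form.DL_Submatrix" "Jordan_Normal_Form.Determinant"
begin

definition pinv :: "real mat \<Rightarrow> real mat" where
  "pinv M = (THE X. X \<in> carrier_mat (dim_col M) (dim_row M) \<and>
       M * X * M = M \<and> X * M * X = X \<and>
       (M * X)\<^sup>T = M * X \<and> (X * M)\<^sup>T = X * M)"

definition colsub :: "real mat \<Rightarrow> nat set \<Rightarrow> real mat" where
  "colsub B S = submatrix B {0..<dim_row B} S"

(* P_k(x; A', B); indices are 0-based, [d_B] = {0..<dim_col B} *)
definition Pk :: "nat \<Rightarrow> real \<Rightarrow> real mat \<Rightarrow> real mat \<Rightarrow> real" where
  "Pk k x A' B = (\<Sum>S \<in> {S. S \<subseteq> {0..<dim_col B} \<and> card S = k}.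
      det ((colsub B S)\<^sup>T * colsub B S) *
      det (x \<cdot>\<^sub>m 1\<^sub>m (dim_col A') -
           A'\<^sup>T * (1\<^sub>m (dim_row A') - colsub B S * pinv (colsub B S)) * A'))"

definition pd :: "nat \<Rightarrow> ((nat \<Rightarrow> real) \<Rightarrow> real) \<Rightarrow> (nat \<Rightarrow> real) \<Rightarrow> real" where
  "pd i f z = deriv (\<lambda>t. f (z(i := t))) (z i)"

fun mixd :: "nat \<Rightarrow> ((nat \<Rightarrow> real) \<Rightarrow> real) \<Rightarrow> (nat \<Rightarrow> real) \<Rightarrow> real" where
  "mixd 0 f = f"
| "mixd (Suc j) f = pd j (mixd j f)"

definition dirD :: "nat \<Rightarrow> (nat \<Rightarrow> real) \<Rightarrow> ((nat \<Rightarrow> real) \<Rightarrow> real) \<Rightarrow> (nat \<Rightarrow> real) \<Rightarrow> real" where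
  "dirD m b f z = (\<Sum>i<m. b i * pd i f z)"

definition hk :: "nat \<Rightarrow> (nat \<Rightarrow> real) \<Rightarrow> nat \<Rightarrow> (nat \<Rightarrow> real) \<Rightarrow> real" where
  "hk m b k = ((dirD m b) ^^ k) (\<lambda>z. \<Prod>i<m. z i)"

end

(* Write B = U C with C = U^T B; then C C^T = diag b and B B^+ = U U^T, so B B^+ A = U G with
   G = U^T A and M = G G^T = U^T A A^T U.  For a column set S, Sylvester's determinant identity and a
   Schur complement turn the S-summand of P_k(x; B B^+ A, B) into x^(d + |S| - m) times the bordered
   determinant det [[x - M, C_S], [-C_S^T, 0]] (both vanish when C_S has dependent columns).  Summed
   over |S| = k, the bordered determinants are the coefficient of t^k in
   det (x - M + t C C^T) = det (x - M + t diag b), which is the sum over |S'| = m - k of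
   b^(S'^C) times the principal minor of x - M on S'.
   On the other side h_k(z) = k! sum b^(S^C) z^S and det (Z - M) = sum_A z^(A^C) det (-M)_A are
   multi-affine, so applying d/dz_1 ... d/dz_m to their product at z_i = x/2 keeps exactly the pairs
   A subset S, each contributing x^|S - A| det (-M)_A; summing over A gives the same principal
   minors of x - M. *)

theory Submission
  imports Defs "HOL-Library.Ramsey"
begin

lemma minus_add_cancel_mat:
  fixes P :: "'a :: ab_group_add mat"
  shows "P \<in> carrier_mat r c \<Longrightarrow> Z \<in> carrier_mat r c \<Longrightarrow> P - Z + Z = P"
  by (rule eq_matI) auto

lemma add_minus_cancel_mat:
  fixes P :: "'a :: ab_group_add mat"
  shows "P \<in> carrier_mat r c \<Longrightarrow> Z \<in> carrier_mat r c \<Longrightarrow> Z + (P - Z) = P"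
  by (rule eq_matI) auto

lemma minus_uminus_mat:
  fixes P :: "'a :: ab_group_add mat"
  shows "P \<in> carrier_mat r c \<Longrightarrow> Z \<in> carrier_mat r c \<Longrightarrow> P - (- Z) = P + Z"
  by (rule eq_matI) auto

lemma one_smult_mat: "(1 :: 'a :: monoid_mult) \<cdot>\<^sub>m A = A"
  by (rule eq_matI) auto

lemma smult_smult_mat: "a \<cdot>\<^sub>m (c \<cdot>\<^sub>m A) = (a * c :: 'a :: semigroup_mult) \<cdot>\<^sub>m A"
  by (rule eq_matI) (auto simp: mult.assoc)

lemma mult_assoc_mat: "dim_col A = dim_row B \<Longrightarrow> dim_col B = dim_row C \<Longrightarrow> A * B * C = A * (B * C)"
  by (rule assoc_mult_mat[of A "dim_row A" "dim_col A" B "dim_col B" C "dim_col C"]) auto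

lemma transpose_mult_mat:
  fixes A :: "'a :: comm_semiring_0 mat"
  shows "dim_col A = dim_row B \<Longrightarrow> (A * B)\<^sup>T = B\<^sup>T * A\<^sup>T"
  by (rule transpose_mult[of A "dim_row A" "dim_col A" B "dim_col B"]) auto

lemma dim_mat_diag [simp]: "dim_row (mat_diag n f) = n" "dim_col (mat_diag n f) = n"
  by (simp_all add: mat_diag_def)

lemma transpose_mat_diag [simp]: "(mat_diag n f)\<^sup>T = mat_diag n f"
  by (rule eq_matI) (auto simp: mat_diag_def)

lemma self_scalar_prod_eq_0D:
  fixes w :: "'a :: linordered_idom vec"
  assumes "w \<bullet> w = 0"
  shows "w = 0\<^sub>v (dim_vec w)"
proof -
  have "(\<Sum>i\<in>{0..<dim_vec w}. w $ i * w $ i) = 0" using assms by (simp add: scalar_prod_def)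
  then have "\<forall>i\<in>{0..<dim_vec w}. w $ i * w $ i = 0" by (subst sum_nonneg_eq_0_iff[symmetric]) auto
  then show ?thesis by (intro eq_vecI) auto
qed

lemma mult_transpose_self_eq_0D:
  fixes E :: "'a :: linordered_idom mat"
  assumes E: "E \<in> carrier_mat r p" and zero: "E * E\<^sup>T = 0\<^sub>m r r"
  shows "E = 0\<^sub>m r p"
proof (rule eq_matI)
  fix i j assume i: "i < dim_row (0\<^sub>m r p)" and j: "j < dim_col (0\<^sub>m r p)"
  have "(E * E\<^sup>T) $$ (i, i) = 0" using zero i by simp
  then have "(\<Sum>l\<in>{0..<p}. E $$ (i, l) * E $$ (i, l)) = 0" using E i by (simp add: scalar_prod_def)
  then have "\<forall>l\<in>{0..<p}. E $$ (i, l) * E $$ (i, l) = 0" by (subst sum_nonneg_eq_0_iff[symmetric]) auto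
  then show "E $$ (i, j) = 0\<^sub>m r p $$ (i, j)" using i j by auto
qed (use E in auto)

lemma pick_atLeast0LessThan: "i < m \<Longrightarrow> pick {0..<m} i = i"
proof (induction i)
  case 0
  show ?case by (simp, rule Least_equality) (use 0 in auto)
next
  case (Suc i)
  show ?case using Suc by (simp, intro Least_equality) auto
qed

lemma bij_betw_pick:
  assumes "finite S"
  shows "bij_betw (pick S) {0..<card S} S"
proof -
  have inj: "inj_on (pick S) {0..<card S}"
  proof (rule inj_onI)
    fix i j assume "i \<in> {0..<card S}" "j \<in> {0..<card S}" "pick S i = pick S j"
    then show "i = j" using pick_mono_le[of i S j] pick_mono_le[of j S i] by (cases i j rule: linorder_cases) auto
  qed
  moreover have "pick S ` {0..<card S} \<subseteq> S" using pick_in_set_le by auto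
  moreover have "card (pick S ` {0..<card S}) = card S" using card_image[OF inj] by simp
  ultimately show ?thesis using card_subset_eq[OF assms] by (simp add: bij_betw_def)
qed

lemma submatrix_cols_dims:
  assumes "C \<in> carrier_mat m N" and "S \<subseteq> {0..<N}"
  shows "card {i. i < dim_row C \<and> i \<in> {0..<m}} = m" and "card {j. j < dim_col C \<and> j \<in> S} = card S"
proof -
  show "card {i. i < dim_row C \<and> i \<in> {0..<m}} = m" using assms(1) by simp
  have "{j. j < dim_col C \<and> j \<in> S} = S" using assms by auto
  then show "card {j. j < dim_col C \<and> j \<in> S} = card S" by simp
qed

lemma submatrix_cols_carrier:
  assumes "C \<in> carrier_mat m N" and "S \<subseteq> {0..<N}"
  shows "submatrix C {0..<m} S \<in> carrier_mat m (card S)"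
  unfolding carrier_mat_def using dim_submatrix[of C "{0..<m}" S] submatrix_cols_dims[OF assms] by simp

lemma submatrix_cols_index:
  assumes "C \<in> carrier_mat m N" and "S \<subseteq> {0..<N}" and "i < m" and "j < card S"
  shows "submatrix C {0..<m} S $$ (i, j) = C $$ (i, pick S j)"
  using submatrix_index[of i C "{0..<m}" j S] submatrix_cols_dims[OF assms(1,2)] assms(3,4)
    pick_atLeast0LessThan[OF assms(3)] by simp

lemma submatrix_cols_mult:
  fixes A C :: "'a :: semiring_0 mat"
  assumes A: "A \<in> carrier_mat n m" and C: "C \<in> carrier_mat m N" and S: "S \<subseteq> {0..<N}"
  shows "submatrix (A * C) {0..<n} S = A * submatrix C {0..<m} S"
proof -
  have AC: "A * C \<in> carrier_mat n N" using A C by simp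
  have CS: "submatrix C {0..<m} S \<in> carrier_mat m (card S)" by (rule submatrix_cols_carrier[OF C S])
  show ?thesis
  proof (rule eq_matI)
    fix i j assume "i < dim_row (A * submatrix C {0..<m} S)" "j < dim_col (A * submatrix C {0..<m} S)"
    then have i: "i < n" and j: "j < card S" using A CS by auto
    have "pick S j < N" using pick_in_set_le[OF j] S by auto
    moreover have "col C (pick S j) = col (submatrix C {0..<m} S) j"
      using C CS j \<open>pick S j < N\<close> by (intro eq_vecI) (auto simp: submatrix_cols_index[OF C S])
    ultimately show "submatrix (A * C) {0..<n} S $$ (i, j) = (A * submatrix C {0..<m} S) $$ (i, j)"
      using A C CS i j by (simp add: submatrix_cols_index[OF AC S])
  qed (use submatrix_cols_carrier[OF AC S] A CS in auto)
qed

lemma orthonormal_sandwich: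
  fixes U :: "'a :: comm_ring_1 mat"
  assumes U: "U \<in> carrier_mat n m" and UU: "U\<^sup>T * U = 1\<^sub>m m"
    and G: "G \<in> carrier_mat m d" and P: "P \<in> carrier_mat m m"
  shows "(U * G)\<^sup>T * (1\<^sub>m n - U * P * U\<^sup>T) * (U * G) = G\<^sup>T * (1\<^sub>m m - P) * G"
proof -
  have UtUX: "U\<^sup>T * (U * X) = X" if "dim_row X = m" for X
    using that U UU by (simp add: mult_assoc_mat[symmetric])
  have "(1\<^sub>m n - U * P * U\<^sup>T) * (U * G) = U * G - U * (P * G)"
    by (subst minus_mult_distrib_mat[where nr=n and n=n and nc=d]) (use U P G in \<open>auto simp: mult_assoc_mat UtUX\<close>)
  also have "\<dots> = U * ((1\<^sub>m m - P) * G)"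
    using U P G by (simp add: minus_mult_distrib_mat[where nr=m and n=m and nc=d]
        mult_minus_distrib_mat[where nr=n and n=m and nc=d])
  finally show ?thesis
    using U P G by (simp add: transpose_mult_mat mult_assoc_mat UtUX)
qed

section \<open>Principal minors\<close>

definition principal_minor :: "(nat \<Rightarrow> nat \<Rightarrow> 'a :: comm_ring_1) \<Rightarrow> nat set \<Rightarrow> 'a" where
  "principal_minor N I = (\<Sum>p\<in>{p. p permutes I}. of_int (sign p) * (\<Prod>i\<in>I. N i (p i)))"

lemma det_eq_principal_minor:
  assumes "M \<in> carrier_mat n n"
  shows "det M = principal_minor (\<lambda>i j. M $$ (i, j)) {0..<n}"
  unfolding det_def'[OF assms] principal_minor_def by simp

lemma principal_minor_cong:
  "(\<And>i j. i \<in> I \<Longrightarrow> j \<in> I \<Longrightarrow> N i j = N' i j) \<Longrightarrow> principal_minor N I = principal_minor N' I"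
  unfolding principal_minor_def
  by (intro sum.cong refl arg_cong2[where f="(*)"] prod.cong) (auto dest: permutes_in_image)

lemma permutes_fixing_outside:
  assumes "A \<subseteq> I"
  shows "{p. p permutes I \<and> (\<forall>i\<in>I - A. p i = i)} = {p. p permutes A}"
  using assms unfolding permutes_def by blast

lemma principal_minor_reindex:
  assumes inj: "inj_on f I" and fin: "finite I"
  shows "principal_minor N (f ` I) = principal_minor (\<lambda>i j. N (f i) (f j)) I"
proof -
  have bij: "bij_betw f I (f ` I)" using inj by (simp add: bij_betw_imageI)
  let ?g = "\<lambda>q x. if x \<in> f ` I then f (q (inv_into I f x)) else x"
  have "principal_minor N (f ` I)
      = (\<Sum>q\<in>{q. q permutes I}. of_int (sign (?g q)) * (\<Prod>i\<in>f ` I. N i (?g q i)))"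
    unfolding principal_minor_def
    by (rule sum.reindex_bij_betw[OF bij_betw_permutations[OF bij], symmetric])
  also have "\<dots> = (\<Sum>q\<in>{q. q permutes I}. of_int (sign q) * (\<Prod>j\<in>I. N (f j) (f (q j))))"
  proof (rule sum.cong[OF refl])
    fix q assume q: "q \<in> {q. q permutes I}"
    interpret pb: permutes_bij_finite q I "f ` I" f "inv_into I f" "?g q"
      by unfold_locales (use q bij fin inj in auto)
    have "(\<Prod>i\<in>f ` I. N i (?g q i)) = (\<Prod>j\<in>I. N (f j) (?g q (f j)))"
      by (rule prod.reindex[OF inj, unfolded comp_def])
    also have "\<dots> = (\<Prod>j\<in>I. N (f j) (f (q j)))"
      using inj by (intro prod.cong) auto
    finally show "of_int (sign (?g q)) * (\<Prod>i\<in>f ` I. N i (?g q i))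
        = of_int (sign q) * (\<Prod>j\<in>I. N (f j) (f (q j)))"
      using pb.sign_p' by simp
  qed
  finally show ?thesis unfolding principal_minor_def .
qed

text \<open>Expanding every factor of the Leibniz formula as a sum of its diagonal and off-diagonal
  part: only permutations fixing the complement of the chosen set survive.\<close>

lemma principal_minor_diag_add:
  assumes fin: "finite I"
  shows "principal_minor (\<lambda>i j. (if i = j then z i else 0) + N i j) I
       = (\<Sum>A\<in>Pow I. (\<Prod>i\<in>I - A. z i) * principal_minor N A)"
proof -
  let ?P = "{p. p permutes I}"
  let ?D = "\<lambda>p A. \<Prod>i\<in>I - A. if i = p i then z i else 0"
  have diag: "?D p A = (if \<forall>i\<in>I - A. p i = i then \<Prod>i\<in>I - A. z i else 0)" for p A
  proof (cases "\<forall>i\<in>I - A. p i = i")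
    case False
    then obtain i where "i \<in> I - A" "p i \<noteq> i" by blast
    then show ?thesis using fin by (auto intro!: prod_zero bexI[of _ i])
  qed (auto intro!: prod.cong)
  have "principal_minor (\<lambda>i j. (if i = j then z i else 0) + N i j) I
      = (\<Sum>p\<in>?P. \<Sum>A\<in>Pow I. of_int (sign p) * ((\<Prod>i\<in>A. N i (p i)) * ?D p A))"
    unfolding principal_minor_def
    by (simp add: prod_add[OF fin] add.commute[of "if _ then _ else _"] sum_distrib_left)
  also have "\<dots> = (\<Sum>A\<in>Pow I. \<Sum>p\<in>?P. of_int (sign p) * ((\<Prod>i\<in>A. N i (p i)) * ?D p A))"
    by (rule sum.swap)
  also have "\<dots> = (\<Sum>A\<in>Pow I. (\<Prod>i\<in>I - A. z i) * principal_minor N A)"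
  proof (rule sum.cong[OF refl])
    fix A assume "A \<in> Pow I"
    then have "{p\<in>?P. \<forall>i\<in>I - A. p i = i} = {p. p permutes A}"
      using permutes_fixing_outside[of A I] by auto
    then show "(\<Sum>p\<in>?P. of_int (sign p) * ((\<Prod>i\<in>A. N i (p i)) * ?D p A))
        = (\<Prod>i\<in>I - A. z i) * principal_minor N A"
      unfolding diag principal_minor_def
      by (simp add: sum.inter_filter[OF finite_permutations[OF fin], symmetric] if_distrib
          sum_distrib_left mult_ac cong: if_cong)
  qed
  finally show ?thesis .
qed

lemma det_add_smult_diag:
  fixes Y :: "'a :: comm_ring_1 mat"
  assumes Y: "Y \<in> carrier_mat m m"
  shows "det (Y + t \<cdot>\<^sub>m mat_diag m b)
       = (\<Sum>A\<in>Pow {..<m}. t ^ (m - card A) * ((\<Prod>i\<in>{..<m} - A. b i) * principal_minor (\<lambda>i j. Y $$ (i, j)) A))"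
proof -
  have "det (Y + t \<cdot>\<^sub>m mat_diag m b)
      = principal_minor (\<lambda>i j. (if i = j then t * b i else 0) + Y $$ (i, j)) {..<m}"
    using Y by (subst det_eq_principal_minor[of _ m])
      (auto intro!: principal_minor_cong simp: mat_diag_def atLeast0LessThan)
  also have "\<dots> = (\<Sum>A\<in>Pow {..<m}. (\<Prod>i\<in>{..<m} - A. t * b i) * principal_minor (\<lambda>i j. Y $$ (i, j)) A)"
    by (rule principal_minor_diag_add) simp
  also have "\<dots> = (\<Sum>A\<in>Pow {..<m}. t ^ (m - card A) * ((\<Prod>i\<in>{..<m} - A. b i) * principal_minor (\<lambda>i j. Y $$ (i, j)) A))"
    by (intro sum.cong refl) (auto simp: prod.distrib card_Diff_subset finite_subset)
  finally show ?thesis .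
qed

section \<open>Polynomials given as sums of monomials\<close>

definition monomial_sum :: "'a set \<Rightarrow> ('a \<Rightarrow> real) \<Rightarrow> ('a \<Rightarrow> nat \<Rightarrow> nat) \<Rightarrow> nat \<Rightarrow> (nat \<Rightarrow> real) \<Rightarrow> real" where
  "monomial_sum F c e m z = (\<Sum>a\<in>F. c a * (\<Prod>i<m. z i ^ e a i))"

lemma prod_power_of_bool:
  "finite I \<Longrightarrow> (\<Prod>i\<in>I. f i ^ of_bool (P i)) = (\<Prod>i\<in>{i\<in>I. P i}. f i)"
  by (auto simp: prod.inter_filter intro!: prod.cong)

lemma has_real_derivative_monomial:
  fixes z :: "nat \<Rightarrow> real"
  assumes j: "j < m"
  shows "((\<lambda>t. \<Prod>i<m. (z(j := t)) i ^ q i) has_real_derivative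
          of_nat (q j) * (\<Prod>i<m. (z(j := t)) i ^ (if i = j then q i - 1 else q i))) (at t)"
proof -
  let ?R = "\<Prod>i\<in>{..<m} - {j}. z i ^ q i"
  have split: "(\<Prod>i<m. (z(j := s)) i ^ p i) = s ^ p j * (\<Prod>i\<in>{..<m} - {j}. z i ^ p i)" for s p
    using j by (subst prod.remove[of _ j]) (auto intro!: prod.cong)
  have "((\<lambda>s. s ^ q j * ?R) has_real_derivative (of_nat (q j) * t ^ (q j - 1)) * ?R) (at t)"
    by (intro derivative_eq_intros) auto
  then show ?thesis
    using split[of _ q] split[of t "\<lambda>i. if i = j then q i - 1 else q i"] by (simp add: mult.assoc)
qed

lemma pd_monomial_sum:
  assumes "finite F" and j: "j < m"
  shows "pd j (monomial_sum F c e m)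
       = monomial_sum F (\<lambda>a. c a * of_nat (e a j)) (\<lambda>a i. if i = j then e a i - 1 else e a i) m"
proof
  fix z
  have "((\<lambda>t. monomial_sum F c e m (z(j := t))) has_real_derivative
     (\<Sum>a\<in>F. c a * (of_nat (e a j) * (\<Prod>i<m. (z(j := z j)) i ^ (if i = j then e a i - 1 else e a i))))) (at (z j))"
    unfolding monomial_sum_def by (intro DERIV_sum DERIV_cmult has_real_derivative_monomial[OF j])
  then show "pd j (monomial_sum F c e m) z
      = monomial_sum F (\<lambda>a. c a * of_nat (e a j)) (\<lambda>a i. if i = j then e a i - 1 else e a i) m z"
    unfolding pd_def monomial_sum_def by (simp add: DERIV_imp_deriv mult.assoc)
qed

lemma mixd_monomial_sum:
  assumes fin: "finite F" and "j \<le> m"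
  shows "mixd j (monomial_sum F c e m)
       = monomial_sum F (\<lambda>a. c a * (\<Prod>i<j. of_nat (e a i))) (\<lambda>a i. if i < j then e a i - 1 else e a i) m"
  using \<open>j \<le> m\<close>
proof (induction j)
  case (Suc j)
  have exps: "(\<lambda>a i. if i = j then (if i < j then e a i - 1 else e a i) - 1 else if i < j then e a i - 1 else e a i)
      = (\<lambda>a i. if i < Suc j then e a i - 1 else e a i)"
    by (auto simp: fun_eq_iff less_Suc_eq)
  show ?case
    using Suc by (simp add: pd_monomial_sum[OF fin] mult.assoc exps)
qed simp

lemma mixd_monomial_sum_diagonal:
  assumes "finite F"
  shows "mixd m (monomial_sum F c e m) (\<lambda>i. y) = (\<Sum>a\<in>F. c a * (\<Prod>i<m. of_nat (e a i) * y ^ (e a i - 1)))"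
  unfolding mixd_monomial_sum[OF assms le_refl] monomial_sum_def
  by (intro sum.cong refl) (simp add: prod.distrib mult.assoc)

lemma monomial_sum_mult:
  assumes "finite F" "finite G"
  shows "monomial_sum F c e m z * monomial_sum G c' e' m z
       = monomial_sum (F \<times> G) (\<lambda>(a, a'). c a * c' a') (\<lambda>(a, a') i. e a i + e' a' i) m z"
  unfolding monomial_sum_def sum_product
  by (subst sum.cartesian_product) (auto intro!: sum.cong simp: power_add prod.distrib mult_ac)

section \<open>The polynomials \<open>h\<^sub>k\<close>\<close>

lemma sum_nsets_containing:
  assumes "i \<in> I"
  shows "(\<Sum>S\<in>{S\<in>nsets I (Suc j). i \<in> S}. g S) = (\<Sum>S\<in>{S\<in>nsets I j. i \<notin> S}. g (insert i S))"
  by (rule sum.reindex_bij_witness[of _ "insert i" "\<lambda>S. S - {i}"])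
    (use assms in \<open>auto simp: nsets_def card_Diff_singleton_if insert_absorb\<close>)

lemma prod_squarefree_monomial:
  fixes m :: nat
  shows "S \<subseteq> {..<m} \<Longrightarrow> (\<Prod>l<m. z l ^ of_bool (l \<in> S)) = (\<Prod>l\<in>S. z l)"
  by (subst prod_power_of_bool) (auto intro: prod.cong)

lemma dirD_squarefree_monomial_sum:
  assumes fin: "finite F" and sub: "\<forall>S\<in>F. S \<subseteq> {..<m}"
  shows "dirD m b (monomial_sum F c (\<lambda>S l. of_bool (l \<in> S)) m) z
       = (\<Sum>i<m. \<Sum>S\<in>{S\<in>F. i \<in> S}. b i * c S * (\<Prod>l\<in>S - {i}. z l))"
  unfolding dirD_def
proof (intro sum.cong refl)
  fix i assume i: "i \<in> {..<m}"
  then have "i < m" by simp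
  have exps: "(\<lambda>S l. if l = i then of_bool (l \<in> S) - 1 else of_bool (l \<in> S)) = (\<lambda>S l. of_bool (l \<in> S - {i}) :: nat)"
    by (auto simp: fun_eq_iff)
  have mono: "(\<Prod>l<m. z l ^ of_bool (l \<in> S \<and> l \<noteq> i)) = (\<Prod>l\<in>S - {i}. z l)" if "S \<in> F" for S
    using that sub prod_squarefree_monomial[of "S - {i}" m z] by auto
  have "b i * pd i (monomial_sum F c (\<lambda>S l. of_bool (l \<in> S)) m) z
      = (\<Sum>S\<in>F. if i \<in> S then b i * c S * (\<Prod>l\<in>S - {i}. z l) else 0)"
    using i unfolding pd_monomial_sum[OF fin \<open>i < m\<close>] exps monomial_sum_def sum_distrib_left
    by (intro sum.cong refl) (simp add: mono)
  then show "b i * pd i (monomial_sum F c (\<lambda>S l. of_bool (l \<in> S)) m) z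
      = (\<Sum>S\<in>{S\<in>F. i \<in> S}. b i * c S * (\<Prod>l\<in>S - {i}. z l))"
    by (simp add: sum.inter_filter[OF fin])
qed

lemma prod_diff_insert:
  assumes "finite A" "i \<in> A" "i \<notin> S"
  shows "f i * (\<Prod>l\<in>A - insert i S. f l) = (\<Prod>l\<in>A - S. f l)"
proof -
  have "A - S - {i} = A - insert i S" by blast
  then show ?thesis using assms by (simp add: prod.remove[of "A - S" i])
qed

lemma dirD_elementary_monomial_sum:
  assumes k: "k < m"
  shows "dirD m b (monomial_sum (nsets {..<m} (m - k)) (\<lambda>S. c * (\<Prod>i\<in>{..<m} - S. b i)) (\<lambda>S i. of_bool (i \<in> S)) m)
       = monomial_sum (nsets {..<m} (m - Suc k)) (\<lambda>S. of_nat (Suc k) * c * (\<Prod>i\<in>{..<m} - S. b i))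
           (\<lambda>S i. of_bool (i \<in> S)) m"
proof
  fix z
  let ?F = "\<lambda>j. nsets {..<m} j"
  let ?c = "\<lambda>S. c * (\<Prod>i\<in>{..<m} - S. b i)"
  have m_k: "m - k = Suc (m - Suc k)" using k by simp
  have "dirD m b (monomial_sum (?F (m - k)) ?c (\<lambda>S i. of_bool (i \<in> S)) m) z
      = (\<Sum>i<m. \<Sum>S\<in>{S\<in>?F (m - k). i \<in> S}. b i * ?c S * (\<Prod>l\<in>S - {i}. z l))"
    by (rule dirD_squarefree_monomial_sum) (auto simp: finite_imp_finite_nsets nsets_def)
  also have "\<dots> = (\<Sum>i<m. \<Sum>S\<in>{S\<in>?F (m - Suc k). i \<notin> S}. b i * ?c (insert i S) * (\<Prod>l\<in>S. z l))"
  proof (rule sum.cong[OF refl])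
    fix i assume "i \<in> {..<m}"
    then show "(\<Sum>S\<in>{S\<in>?F (m - k). i \<in> S}. b i * ?c S * (\<Prod>l\<in>S - {i}. z l))
        = (\<Sum>S\<in>{S\<in>?F (m - Suc k). i \<notin> S}. b i * ?c (insert i S) * (\<Prod>l\<in>S. z l))"
      unfolding m_k sum_nsets_containing[OF \<open>i \<in> {..<m}\<close>] by (intro sum.cong refl) auto
  qed
  also have "\<dots> = (\<Sum>i<m. \<Sum>S\<in>{S\<in>?F (m - Suc k). i \<notin> S}. ?c S * (\<Prod>l\<in>S. z l))"
    by (intro sum.cong refl) (auto simp: mult_ac prod_diff_insert[of "{..<m}" _ _ b, simplified])
  also have "\<dots> = (\<Sum>S\<in>?F (m - Suc k). \<Sum>i\<in>{i\<in>{..<m}. i \<notin> S}. ?c S * (\<Prod>l\<in>S. z l))"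
    by (rule sum.swap_restrict) (auto simp: finite_imp_finite_nsets)
  also have "\<dots> = (\<Sum>S\<in>?F (m - Suc k). of_nat (Suc k) * ?c S * (\<Prod>l<m. z l ^ of_bool (l \<in> S)))"
  proof (rule sum.cong[OF refl])
    fix S assume S: "S \<in> ?F (m - Suc k)"
    then have "{i\<in>{..<m}. i \<notin> S} = {..<m} - S" "S \<subseteq> {..<m}" by (auto simp: nsets_def)
    then have "card {i\<in>{..<m}. i \<notin> S} = Suc k"
      using S k by (simp add: nsets_def card_Diff_subset)
    then show "(\<Sum>i\<in>{i\<in>{..<m}. i \<notin> S}. ?c S * (\<Prod>l\<in>S. z l))
        = of_nat (Suc k) * ?c S * (\<Prod>l<m. z l ^ of_bool (l \<in> S))"
      using \<open>S \<subseteq> {..<m}\<close> by (simp add: prod_squarefree_monomial)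
  qed
  finally show "dirD m b (monomial_sum (?F (m - k)) ?c (\<lambda>S i. of_bool (i \<in> S)) m) z
      = monomial_sum (?F (m - Suc k)) (\<lambda>S. of_nat (Suc k) * c * (\<Prod>i\<in>{..<m} - S. b i)) (\<lambda>S i. of_bool (i \<in> S)) m z"
    unfolding monomial_sum_def by (simp add: mult.assoc)
qed

lemma hk_eq_monomial_sum:
  assumes "k \<le> m"
  shows "hk m b k = monomial_sum (nsets {..<m} (m - k)) (\<lambda>S. fact k * (\<Prod>i\<in>{..<m} - S. b i)) (\<lambda>S i. of_bool (i \<in> S)) m"
  using assms
proof (induction k)
  case 0
  show ?case by (simp add: hk_def monomial_sum_def)
next
  case (Suc k)
  have "hk m b (Suc k) = dirD m b (hk m b k)" by (simp add: hk_def)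
  then show ?case using Suc by (simp add: dirD_elementary_monomial_sum)
qed

lemma hk_eq:
  assumes "k \<le> m"
  shows "hk m b k z = fact k * (\<Sum>S\<in>nsets {..<m} (m - k). (\<Prod>i\<in>{..<m} - S. b i) * (\<Prod>i\<in>S. z i))"
  unfolding hk_eq_monomial_sum[OF assms] monomial_sum_def
  by (auto simp: sum_distrib_left nsets_def prod_squarefree_monomial mult.assoc intro!: sum.cong)

section \<open>The mixed derivative of \<open>h\<^sub>k(z) det(Z - M)\<close> on the diagonal\<close>

lemma det_diag_sub_eq_monomial_sum:
  assumes M: "M \<in> carrier_mat m m"
  shows "det (mat_diag m z - M)
       = monomial_sum (Pow {..<m}) (\<lambda>A. principal_minor (\<lambda>i j. - M $$ (i, j)) A) (\<lambda>A i. of_bool (i \<notin> A)) m z"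
proof -
  have "det (mat_diag m z - M) = principal_minor (\<lambda>i j. (if i = j then z i else 0) + - M $$ (i, j)) {..<m}"
    using M by (subst det_eq_principal_minor[of _ m])
      (auto intro!: principal_minor_cong simp: mat_diag_def atLeast0LessThan)
  also have "\<dots> = (\<Sum>A\<in>Pow {..<m}. (\<Prod>i\<in>{..<m} - A. z i) * principal_minor (\<lambda>i j. - M $$ (i, j)) A)"
    by (rule principal_minor_diag_add) simp
  finally show ?thesis
    unfolding monomial_sum_def by (auto simp: prod_power_of_bool set_diff_eq intro!: sum.cong)
qed

text \<open>Each variable occurs in \<open>z\<^bsup>S\<^esup> \<cdot> z\<^bsup>{..<m} - A\<^esup>\<close> with exponent at most 2; differentiating once in every
  variable and putting \<open>z\<^sub>i = x / 2\<close> turns the squares into \<open>x\<close>, the linear factors into 1, and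
  kills the monomial as soon as some variable is missing, i.e. unless \<open>A \<subseteq> S\<close>.\<close>

lemma mixd_factor_diagonal:
  fixes m :: nat and x :: real
  assumes S: "S \<subseteq> {..<m}" and A: "A \<subseteq> {..<m}"
  shows "(\<Prod>i<m. of_nat (of_bool (i \<in> S) + of_bool (i \<notin> A)) * (x / 2) ^ (of_bool (i \<in> S) + of_bool (i \<notin> A) - 1))
       = (if A \<subseteq> S then x ^ card (S - A) else 0)"
proof (cases "A \<subseteq> S")
  case True
  have "(\<Prod>i<m. of_nat (of_bool (i \<in> S) + of_bool (i \<notin> A)) * (x / 2) ^ (of_bool (i \<in> S) + of_bool (i \<notin> A) - 1))
      = (\<Prod>i<m. if i \<in> S - A then x else 1)"
    using True by (intro prod.cong) auto
  also have "\<dots> = (\<Prod>i\<in>S - A. x)"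
    by (rule prod.mono_neutral_cong_right) (use S in auto)
  finally show ?thesis using True by simp
next
  case False
  then obtain i where "i \<in> A" "i \<notin> S" by blast
  then show ?thesis using A by (auto intro!: prod_zero bexI[of _ i])
qed

lemma sum_Pow_principal_minor_powers:
  assumes S: "S \<subseteq> I" and "finite I"
  shows "(\<Sum>A\<in>Pow I. principal_minor N A * (if A \<subseteq> S then x ^ card (S - A) else 0))
       = principal_minor (\<lambda>i j. (if i = j then x else 0) + N i j) S"
proof -
  have "finite S" using assms finite_subset by blast
  have "{A\<in>Pow I. A \<subseteq> S} = Pow S" using S by auto
  then have "(\<Sum>A\<in>Pow I. principal_minor N A * (if A \<subseteq> S then x ^ card (S - A) else 0))
      = (\<Sum>A\<in>Pow S. (\<Prod>i\<in>S - A. x) * principal_minor N A)"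
    using \<open>finite I\<close> by (simp add: sum.inter_filter[symmetric] if_distrib mult.commute cong: if_cong)
  also have "\<dots> = principal_minor (\<lambda>i j. (if i = j then x else 0) + N i j) S"
    by (rule principal_minor_diag_add[OF \<open>finite S\<close>, symmetric])
  finally show ?thesis .
qed

lemma mixd_hk_mult_det_diag_sub:
  assumes M: "M \<in> carrier_mat m m" and k: "k \<le> m"
  shows "mixd m (\<lambda>z. hk m b k z * det (mat_diag m z - M)) (\<lambda>i. x / 2)
       = fact k * (\<Sum>S\<in>nsets {..<m} (m - k).
            (\<Prod>i\<in>{..<m} - S. b i) * principal_minor (\<lambda>i j. (x \<cdot>\<^sub>m 1\<^sub>m m - M) $$ (i, j)) S)"
proof -
  let ?F = "nsets {..<m} (m - k)"
  let ?c = "\<lambda>S. fact k * (\<Prod>i\<in>{..<m} - S. b i)"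
  let ?N = "\<lambda>i j. - M $$ (i, j)"
  have finF: "finite ?F" by (simp add: finite_imp_finite_nsets)
  have "mixd m (\<lambda>z. hk m b k z * det (mat_diag m z - M)) (\<lambda>i. x / 2)
      = mixd m (monomial_sum (?F \<times> Pow {..<m}) (\<lambda>(S, A). ?c S * principal_minor ?N A)
                  (\<lambda>(S, A) i. of_bool (i \<in> S) + of_bool (i \<notin> A)) m) (\<lambda>i. x / 2)"
    unfolding hk_eq_monomial_sum[OF k] det_diag_sub_eq_monomial_sum[OF M]
    by (simp add: monomial_sum_mult finF)
  also have "\<dots> = (\<Sum>(S, A)\<in>?F \<times> Pow {..<m}. ?c S * principal_minor ?N A * (if A \<subseteq> S then x ^ card (S - A) else 0))"
    unfolding mixd_monomial_sum_diagonal[OF finite_cartesian_product[OF finF finite_Pow_iff[THEN iffD2, OF finite_lessThan]]]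
    by (intro sum.cong refl) (auto simp only: mem_Sigma_iff Pow_iff nsets_def mem_Collect_eq case_prod_conv
        mixd_factor_diagonal)
  also have "\<dots> = (\<Sum>S\<in>?F. \<Sum>A\<in>Pow {..<m}. ?c S * principal_minor ?N A * (if A \<subseteq> S then x ^ card (S - A) else 0))"
    by (rule sum.cartesian_product[symmetric])
  also have "\<dots> = (\<Sum>S\<in>?F. ?c S * principal_minor (\<lambda>i j. (x \<cdot>\<^sub>m 1\<^sub>m m - M) $$ (i, j)) S)"
  proof (rule sum.cong[OF refl])
    fix S assume "S \<in> ?F"
    then have S: "S \<subseteq> {..<m}" by (auto simp: nsets_def)
    have "(\<Sum>A\<in>Pow {..<m}. ?c S * principal_minor ?N A * (if A \<subseteq> S then x ^ card (S - A) else 0))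
        = ?c S * principal_minor (\<lambda>i j. (if i = j then x else 0) + ?N i j) S"
      by (simp add: mult.assoc sum_distrib_left[symmetric] sum_Pow_principal_minor_powers[OF S])
    also have "\<dots> = ?c S * principal_minor (\<lambda>i j. (x \<cdot>\<^sub>m 1\<^sub>m m - M) $$ (i, j)) S"
      using S M by (auto intro!: arg_cong[where f="(*) _"] principal_minor_cong simp: subset_iff)
    finally show "(\<Sum>A\<in>Pow {..<m}. ?c S * principal_minor ?N A * (if A \<subseteq> S then x ^ card (S - A) else 0))
        = ?c S * principal_minor (\<lambda>i j. (x \<cdot>\<^sub>m 1\<^sub>m m - M) $$ (i, j)) S" .
  qed
  finally show ?thesis by (simp add: sum_distrib_left mult.assoc)
qed

lemma det_schur_complement_lower_right:
  fixes P :: "'a :: idom mat"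
  assumes P: "P \<in> carrier_mat a a" and Q: "Q \<in> carrier_mat a b" and R: "R \<in> carrier_mat b a"
    and S: "S \<in> carrier_mat b b" and Si: "Si \<in> carrier_mat b b" and SSi: "Si * S = 1\<^sub>m b"
  shows "det (four_block_mat P Q R S) = det (P - Q * Si * R) * det S"
proof -
  let ?L = "four_block_mat (1\<^sub>m a) (Q * Si) (0\<^sub>m b a) (1\<^sub>m b)"
  let ?R = "four_block_mat (P - Q * Si * R) (0\<^sub>m a b) R S"
  have QSi: "Q * Si \<in> carrier_mat a b" using Q Si by simp
  have QSiR: "Q * Si * R \<in> carrier_mat a a" using QSi R by simp
  have X: "P - Q * Si * R \<in> carrier_mat a a" by (rule minus_carrier_mat[OF QSiR])
  have "?L * ?R = four_block_mat (1\<^sub>m a * (P - Q * Si * R) + Q * Si * R) (1\<^sub>m a * 0\<^sub>m a b + Q * Si * S)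
      (0\<^sub>m b a * (P - Q * Si * R) + 1\<^sub>m b * R) (0\<^sub>m b a * 0\<^sub>m a b + 1\<^sub>m b * S)"
    by (rule mult_four_block_mat[OF one_carrier_mat QSi zero_carrier_mat one_carrier_mat X zero_carrier_mat R S])
  also have "1\<^sub>m a * (P - Q * Si * R) + Q * Si * R = P"
    by (simp only: left_mult_one_mat[OF X] minus_add_cancel_mat[OF P QSiR])
  also have "1\<^sub>m a * 0\<^sub>m a b + Q * Si * S = Q"
    using Q Si S SSi by (simp add: assoc_mult_mat[OF Q Si S])
  also have "0\<^sub>m b a * (P - Q * Si * R) + 1\<^sub>m b * R = R" using R by (simp add: left_mult_zero_mat[OF X])
  also have "0\<^sub>m b a * 0\<^sub>m a b + 1\<^sub>m b * S = S" using S by simp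
  finally have LR: "?L * ?R = four_block_mat P Q R S" .
  have "det (?L * ?R) = det ?L * det ?R"
    by (rule det_mult[of _ "a + b"]) (use QSi X R S in auto)
  also have "det ?L = 1"
    by (subst det_four_block_mat_lower_left_zero[of _ a _ b]) (use QSi in auto)
  also have "det ?R = det (P - Q * Si * R) * det S"
    by (rule det_four_block_mat_upper_right_zero[of _ a _ b]) (use X R S in auto)
  finally show ?thesis using LR by simp
qed

lemma det_schur_complement_upper_left:
  fixes P :: "'a :: idom mat"
  assumes P: "P \<in> carrier_mat a a" and Q: "Q \<in> carrier_mat a b" and R: "R \<in> carrier_mat b a"
    and S: "S \<in> carrier_mat b b" and Pv: "Pv \<in> carrier_mat a a" and PPv: "P * Pv = 1\<^sub>m a"
  shows "det (four_block_mat P Q R S) = det P * det (S - R * Pv * Q)"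
proof -
  let ?L = "four_block_mat P (0\<^sub>m a b) R (1\<^sub>m b)"
  let ?R = "four_block_mat (1\<^sub>m a) (Pv * Q) (0\<^sub>m b a) (S - R * Pv * Q)"
  have PvQ: "Pv * Q \<in> carrier_mat a b" using Q Pv by simp
  have RPvQ: "R * Pv * Q \<in> carrier_mat b b" using R Pv Q by simp
  have X: "S - R * Pv * Q \<in> carrier_mat b b" by (rule minus_carrier_mat[OF RPvQ])
  have "?L * ?R = four_block_mat (P * 1\<^sub>m a + 0\<^sub>m a b * 0\<^sub>m b a) (P * (Pv * Q) + 0\<^sub>m a b * (S - R * Pv * Q))
      (R * 1\<^sub>m a + 1\<^sub>m b * 0\<^sub>m b a) (R * (Pv * Q) + 1\<^sub>m b * (S - R * Pv * Q))"
    by (rule mult_four_block_mat[OF P zero_carrier_mat R one_carrier_mat one_carrier_mat PvQ zero_carrier_mat X])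
  also have "P * 1\<^sub>m a + 0\<^sub>m a b * 0\<^sub>m b a = P" using P by simp
  also have "P * (Pv * Q) + 0\<^sub>m a b * (S - R * Pv * Q) = Q"
    using Q by (simp add: assoc_mult_mat[OF P Pv Q, symmetric] PPv left_mult_zero_mat[OF X])
  also have "R * 1\<^sub>m a + 1\<^sub>m b * 0\<^sub>m b a = R" using R by simp
  also have "R * (Pv * Q) + 1\<^sub>m b * (S - R * Pv * Q) = S"
    by (simp only: assoc_mult_mat[OF R Pv Q, symmetric] left_mult_one_mat[OF X] add_minus_cancel_mat[OF S RPvQ])
  finally have LR: "?L * ?R = four_block_mat P Q R S" .
  have "det (?L * ?R) = det ?L * det ?R"
    by (rule det_mult[of _ "a + b"]) (use PvQ X R P in auto)
  also have "det ?L = det P"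
    by (subst det_four_block_mat_upper_right_zero[of _ a _ b]) (use P R in auto)
  also have "det ?R = det (S - R * Pv * Q)"
    by (subst det_four_block_mat_lower_left_zero[of _ a _ b]) (use PvQ X in auto)
  finally show ?thesis using LR by simp
qed

lemma sylvester_det_identity:
  fixes X :: "'a :: idom mat"
  assumes X: "X \<in> carrier_mat a b" and Y: "Y \<in> carrier_mat b a"
  shows "det (1\<^sub>m a + X * Y) = det (1\<^sub>m b + Y * X)"
proof -
  let ?K = "four_block_mat (1\<^sub>m a) X (- Y) (1\<^sub>m b)"
  have "det ?K = det (1\<^sub>m a - X * 1\<^sub>m b * (- Y)) * det (1\<^sub>m b)"
    by (rule det_schur_complement_lower_right) (use X Y in auto)
  also have "1\<^sub>m a - X * 1\<^sub>m b * (- Y) = 1\<^sub>m a + X * Y"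
    using X Y by (simp add: minus_uminus_mat[of _ a a])
  finally have "det ?K = det (1\<^sub>m a + X * Y)" by simp
  moreover have "det ?K = det (1\<^sub>m a) * det (1\<^sub>m b - (- Y) * 1\<^sub>m a * X)"
    by (rule det_schur_complement_upper_left) (use X Y in auto)
  moreover have "1\<^sub>m b - (- Y) * 1\<^sub>m a * X = 1\<^sub>m b + Y * X"
    using X Y by (simp add: minus_uminus_mat[of _ b b])
  ultimately show ?thesis by simp
qed

lemma det_sub_mult_commute:
  fixes X :: "'a :: field mat"
  assumes X: "X \<in> carrier_mat a b" and Y: "Y \<in> carrier_mat b a" and x: "x \<noteq> 0"
  shows "x ^ a * det (x \<cdot>\<^sub>m 1\<^sub>m b - Y * X) = x ^ b * det (x \<cdot>\<^sub>m 1\<^sub>m a - X * Y)"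
proof -
  have scale: "x \<cdot>\<^sub>m 1\<^sub>m r - Z = x \<cdot>\<^sub>m (1\<^sub>m r + (- (1 / x)) \<cdot>\<^sub>m Z)" if "Z \<in> carrier_mat r r" for Z r
    by (rule eq_matI) (use that x in \<open>auto simp: field_simps\<close>)
  have XY: "X * Y \<in> carrier_mat a a" and YX: "Y * X \<in> carrier_mat b b" using X Y by auto
  have "det (x \<cdot>\<^sub>m 1\<^sub>m b - Y * X) = x ^ b * det (1\<^sub>m b + ((- (1 / x)) \<cdot>\<^sub>m Y) * X)"
    using X Y by (simp add: scale[OF YX] mult_smult_assoc_mat[of _ b a])
  moreover have "det (x \<cdot>\<^sub>m 1\<^sub>m a - X * Y) = x ^ a * det (1\<^sub>m a + X * ((- (1 / x)) \<cdot>\<^sub>m Y))"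
    using X Y by (simp add: scale[OF XY] mult_smult_distrib[of _ a b])
  moreover have "det (1\<^sub>m a + X * ((- (1 / x)) \<cdot>\<^sub>m Y)) = det (1\<^sub>m b + ((- (1 / x)) \<cdot>\<^sub>m Y) * X)"
    by (rule sylvester_det_identity) (use X Y in auto)
  ultimately show ?thesis by simp
qed

section \<open>Bordered determinants\<close>

definition bordered_det :: "'a :: comm_ring_1 mat \<Rightarrow> 'a mat \<Rightarrow> 'a" where
  "bordered_det Y C = det (four_block_mat Y C (- C\<^sup>T) (0\<^sub>m (dim_col C) (dim_col C)))"

text \<open>If \<open>C\<^sup>T C v = 0\<close> with \<open>v \<noteq> 0\<close>, then \<open>C v = 0\<close>, and \<open>(0, v)\<close> lies in the kernel of the bordered matrix.\<close>

lemma bordered_det_eq_0: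
  fixes Y C :: "'a :: linordered_idom mat"
  assumes Y: "Y \<in> carrier_mat m m" and C: "C \<in> carrier_mat m k" and singular: "det (C\<^sup>T * C) = 0"
  shows "bordered_det Y C = 0"
proof -
  have Ct: "C\<^sup>T \<in> carrier_mat k m" using C by simp
  obtain v where v: "v \<in> carrier_vec k" "v \<noteq> 0\<^sub>v k" "(C\<^sup>T * C) *\<^sub>v v = 0\<^sub>v k"
    using singular det_0_iff_vec_prod_zero[OF mult_carrier_mat[OF Ct C]] by blast
  have Cv: "C *\<^sub>v v \<in> carrier_vec m" using C v by simp
  have "(C *\<^sub>v v) \<bullet> (C *\<^sub>v v) = (C\<^sup>T *\<^sub>v (C *\<^sub>v v)) \<bullet> v"
    by (rule transpose_vec_mult_scalar[OF C v(1) Cv, symmetric])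
  also have "C\<^sup>T *\<^sub>v (C *\<^sub>v v) = 0\<^sub>v k" using assoc_mult_mat_vec[OF Ct C v(1)] v(3) by simp
  also have "0\<^sub>v k \<bullet> v = 0" using v(1) by simp
  finally have Cv0: "C *\<^sub>v v = 0\<^sub>v m" using self_scalar_prod_eq_0D[of "C *\<^sub>v v"] C by simp
  let ?K = "four_block_mat Y C (- C\<^sup>T) (0\<^sub>m k k)"
  have K: "?K \<in> carrier_mat (m + k) (m + k)" using Y C by auto
  have w: "0\<^sub>v m @\<^sub>v v \<in> carrier_vec (m + k)" using v by simp
  have w0: "0\<^sub>v m @\<^sub>v v \<noteq> 0\<^sub>v (m + k)"
  proof
    assume zero: "0\<^sub>v m @\<^sub>v v = 0\<^sub>v (m + k)"
    have "v $ i = 0" if "i < k" for i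
    proof -
      have "v $ i = (0\<^sub>v m @\<^sub>v v) $ (m + i)" using v(1) that by simp
      then show ?thesis unfolding zero using that by simp
    qed
    then show False using v(1,2) by (auto intro: eq_vecI)
  qed
  have "?K *\<^sub>v (0\<^sub>v m @\<^sub>v v) = (Y *\<^sub>v 0\<^sub>v m + C *\<^sub>v v) @\<^sub>v (- C\<^sup>T *\<^sub>v 0\<^sub>v m + 0\<^sub>m k k *\<^sub>v v)"
    by (rule four_block_mat_mult_vec[OF Y C uminus_carrier_mat[OF Ct] zero_carrier_mat zero_carrier_vec v(1)])
  also have "\<dots> = 0\<^sub>v (m + k)"
    using Y Ct v(1) Cv0 by (intro eq_vecI) (auto simp: append_vec_def)
  finally show ?thesis
    unfolding bordered_det_def using C det_0_iff_vec_prod_zero[OF K] w w0 by auto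
qed

lemma det_bordered_row_reduce:
  fixes Y C :: "'a :: field mat"
  assumes Y: "Y \<in> carrier_mat m m" and C: "C \<in> carrier_mat m k"
  shows "det (four_block_mat Y C (- C\<^sup>T) (0\<^sub>m k k))
       = det (four_block_mat Y C ((1 / x) \<cdot>\<^sub>m (C\<^sup>T * Y) - C\<^sup>T) ((1 / x) \<cdot>\<^sub>m (C\<^sup>T * C)))"
proof -
  let ?K = "four_block_mat Y C (- C\<^sup>T) (0\<^sub>m k k)"
  let ?L = "four_block_mat (1\<^sub>m m) (0\<^sub>m m k) ((1 / x) \<cdot>\<^sub>m C\<^sup>T) (1\<^sub>m k)"
  have Ct: "C\<^sup>T \<in> carrier_mat k m" and CtC: "C\<^sup>T * C \<in> carrier_mat k k" and CtY: "C\<^sup>T * Y \<in> carrier_mat k m"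
    using C Y by auto
  have sCt: "(1 / x) \<cdot>\<^sub>m C\<^sup>T \<in> carrier_mat k m" and mCt: "- C\<^sup>T \<in> carrier_mat k m" using Ct by auto
  have "?L * ?K = four_block_mat (1\<^sub>m m * Y + 0\<^sub>m m k * - C\<^sup>T) (1\<^sub>m m * C + 0\<^sub>m m k * 0\<^sub>m k k)
      ((1 / x) \<cdot>\<^sub>m C\<^sup>T * Y + 1\<^sub>m k * - C\<^sup>T) ((1 / x) \<cdot>\<^sub>m C\<^sup>T * C + 1\<^sub>m k * 0\<^sub>m k k)"
    by (rule mult_four_block_mat[OF one_carrier_mat zero_carrier_mat sCt one_carrier_mat Y C mCt zero_carrier_mat])
  also have "\<dots> = four_block_mat Y C ((1 / x) \<cdot>\<^sub>m (C\<^sup>T * Y) - C\<^sup>T) ((1 / x) \<cdot>\<^sub>m (C\<^sup>T * C))"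
    by (simp only: left_mult_one_mat[OF Y] left_mult_zero_mat[OF mCt] right_add_zero_mat[OF Y]
        left_mult_one_mat[OF C] left_mult_zero_mat[OF zero_carrier_mat] right_add_zero_mat[OF C]
        mult_smult_assoc_mat[OF Ct Y] left_mult_one_mat[OF mCt] minus_add_uminus_mat[OF smult_carrier_mat[OF CtY] Ct]
        mult_smult_assoc_mat[OF Ct C] left_mult_one_mat[OF zero_carrier_mat] right_add_zero_mat[OF smult_carrier_mat[OF CtC]])
  finally have LK: "?L * ?K = \<dots>" .
  have "det ?L = 1"
    by (subst det_four_block_mat_upper_right_zero[OF one_carrier_mat refl sCt one_carrier_mat]) simp
  moreover have "det (?L * ?K) = det ?L * det ?K"
    by (rule det_mult[of _ "m + k"]) (use Y C mCt sCt in auto)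
  ultimately show ?thesis unfolding LK by simp
qed

lemma schur_complement_projection_eq:
  fixes M C W :: "'a :: field mat"
  assumes M: "M \<in> carrier_mat m m" and C: "C \<in> carrier_mat m k" and W: "W \<in> carrier_mat k k" and x: "x \<noteq> 0"
  shows "(x \<cdot>\<^sub>m 1\<^sub>m m - M) - C * (x \<cdot>\<^sub>m W) * ((1 / x) \<cdot>\<^sub>m (C\<^sup>T * (x \<cdot>\<^sub>m 1\<^sub>m m - M)) - C\<^sup>T)
       = x \<cdot>\<^sub>m 1\<^sub>m m - (1\<^sub>m m - C * W * C\<^sup>T) * M"
proof -
  let ?Y = "x \<cdot>\<^sub>m 1\<^sub>m m - M"
  let ?P = "C * W * C\<^sup>T"
  have Ct: "C\<^sup>T \<in> carrier_mat k m" and CW: "C * W \<in> carrier_mat m k" using C W by auto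
  have Y: "?Y \<in> carrier_mat m m" by (rule minus_carrier_mat[OF M])
  have P: "?P \<in> carrier_mat m m" and CtY: "C\<^sup>T * ?Y \<in> carrier_mat k m" and PM: "?P * M \<in> carrier_mat m m"
    using CW Ct Y M by auto
  have BL: "(1 / x) \<cdot>\<^sub>m (C\<^sup>T * ?Y) - C\<^sup>T \<in> carrier_mat k m" by (rule minus_carrier_mat[OF Ct])
  have "C * (x \<cdot>\<^sub>m W) * ((1 / x) \<cdot>\<^sub>m (C\<^sup>T * ?Y) - C\<^sup>T) = x \<cdot>\<^sub>m ((1 / x) \<cdot>\<^sub>m (?P * ?Y) - ?P)"
    by (simp only: mult_smult_distrib[OF C W] mult_smult_assoc_mat[OF CW BL]
        mult_minus_distrib_mat[OF CW smult_carrier_mat[OF CtY] Ct] mult_smult_distrib[OF CW CtY]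
        assoc_mult_mat[OF CW Ct Y, symmetric])
  also have "?P * ?Y = x \<cdot>\<^sub>m ?P - ?P * M"
    by (simp only: mult_minus_distrib_mat[OF P smult_carrier_mat[OF one_carrier_mat] M]
        mult_smult_distrib[OF P one_carrier_mat] right_mult_one_mat[OF P])
  moreover have "(1\<^sub>m m - ?P) * M = M - ?P * M"
    by (simp only: minus_mult_distrib_mat[OF one_carrier_mat P M] left_mult_one_mat[OF M])
  ultimately show ?thesis
    by (intro eq_matI) (use x M P PM in \<open>auto simp: field_simps\<close>)
qed

text \<open>After the row reduction, the Schur complement of the lower right block \<open>C\<^sup>T C / x\<close> is
  \<open>x 1 - (1 - C W C\<^sup>T) M\<close>.\<close>

lemma bordered_det_sub_eq_projection:
  fixes M C W :: "'a :: field mat"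
  assumes M: "M \<in> carrier_mat m m" and C: "C \<in> carrier_mat m k" and W: "W \<in> carrier_mat k k"
    and W_inv: "W * (C\<^sup>T * C) = 1\<^sub>m k" and x: "x \<noteq> 0"
  shows "det (C\<^sup>T * C) * det (x \<cdot>\<^sub>m 1\<^sub>m m - (1\<^sub>m m - C * W * C\<^sup>T) * M)
       = x ^ k * bordered_det (x \<cdot>\<^sub>m 1\<^sub>m m - M) C"
proof -
  let ?Y = "x \<cdot>\<^sub>m 1\<^sub>m m - M"
  have Ct: "C\<^sup>T \<in> carrier_mat k m" and CtC: "C\<^sup>T * C \<in> carrier_mat k k" using C by auto
  have Y: "?Y \<in> carrier_mat m m" by (rule minus_carrier_mat[OF M])
  have BL: "(1 / x) \<cdot>\<^sub>m (C\<^sup>T * ?Y) - C\<^sup>T \<in> carrier_mat k m" by (rule minus_carrier_mat[OF Ct])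
  have "bordered_det ?Y C = det (four_block_mat ?Y C ((1 / x) \<cdot>\<^sub>m (C\<^sup>T * ?Y) - C\<^sup>T) ((1 / x) \<cdot>\<^sub>m (C\<^sup>T * C)))"
    unfolding bordered_det_def using C by (simp add: det_bordered_row_reduce[OF Y C])
  also have "\<dots> = det (?Y - C * (x \<cdot>\<^sub>m W) * ((1 / x) \<cdot>\<^sub>m (C\<^sup>T * ?Y) - C\<^sup>T)) * det ((1 / x) \<cdot>\<^sub>m (C\<^sup>T * C))"
  proof (rule det_schur_complement_lower_right[OF Y C BL smult_carrier_mat[OF CtC] smult_carrier_mat[OF W]])
    show "x \<cdot>\<^sub>m W * ((1 / x) \<cdot>\<^sub>m (C\<^sup>T * C)) = 1\<^sub>m k"
      using x by (simp add: mult_smult_assoc_mat[OF W smult_carrier_mat[OF CtC]] mult_smult_distrib[OF W CtC]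
          W_inv smult_smult_mat one_smult_mat)
  qed
  also have "\<dots> = (1 / x) ^ k * det (C\<^sup>T * C) * det (x \<cdot>\<^sub>m 1\<^sub>m m - (1\<^sub>m m - C * W * C\<^sup>T) * M)"
    using C by (simp add: schur_complement_projection_eq[OF M C W x])
  finally show ?thesis using x by (simp add: field_simps power_divide)
qed

lemma det_sub_projection_eq_bordered_det:
  fixes G C W :: "'a :: field mat"
  assumes G: "G \<in> carrier_mat m d" and C: "C \<in> carrier_mat m k" and W: "W \<in> carrier_mat k k"
    and W_inv: "W * (C\<^sup>T * C) = 1\<^sub>m k" and x: "x \<noteq> 0"
  shows "x ^ m * (det (C\<^sup>T * C) * det (x \<cdot>\<^sub>m 1\<^sub>m d - G\<^sup>T * ((1\<^sub>m m - C * W * C\<^sup>T) * G)))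
       = x ^ d * x ^ k * bordered_det (x \<cdot>\<^sub>m 1\<^sub>m m - G * G\<^sup>T) C"
proof -
  define dC where "dC = det (C\<^sup>T * C)"
  define dM where "dM = det (x \<cdot>\<^sub>m 1\<^sub>m m - (1\<^sub>m m - C * W * C\<^sup>T) * (G * G\<^sup>T))"
  have P: "C * W * C\<^sup>T \<in> carrier_mat m m" using C W by auto
  have sylvester: "x ^ m * det (x \<cdot>\<^sub>m 1\<^sub>m d - G\<^sup>T * ((1\<^sub>m m - C * W * C\<^sup>T) * G)) = x ^ d * dM"
    unfolding dM_def using det_sub_mult_commute[OF mult_carrier_mat[OF minus_carrier_mat[OF P] G] _ x, of "G\<^sup>T"] G P C W
    by (simp add: mult_assoc_mat)
  have bordered: "dC * dM = x ^ k * bordered_det (x \<cdot>\<^sub>m 1\<^sub>m m - G * G\<^sup>T) C"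
    unfolding dC_def dM_def using G by (intro bordered_det_sub_eq_projection[OF _ C W W_inv x]) simp
  have "x ^ m * (dC * det (x \<cdot>\<^sub>m 1\<^sub>m d - G\<^sup>T * ((1\<^sub>m m - C * W * C\<^sup>T) * G)))
      = dC * (x ^ m * det (x \<cdot>\<^sub>m 1\<^sub>m d - G\<^sup>T * ((1\<^sub>m m - C * W * C\<^sup>T) * G)))"
    by (simp only: mult.left_commute)
  also have "\<dots> = x ^ d * (dC * dM)" by (simp only: sylvester mult.left_commute)
  finally show ?thesis unfolding dC_def[symmetric] bordered by (simp only: mult.assoc)
qed

lemma det_four_block_smult_one:
  fixes Y C :: "'a :: field mat"
  assumes Y: "Y \<in> carrier_mat m m" and C: "C \<in> carrier_mat m N" and s: "s \<noteq> 0"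
  shows "det (four_block_mat Y C (- C\<^sup>T) (s \<cdot>\<^sub>m 1\<^sub>m N)) = s ^ N * det (Y + (1 / s) \<cdot>\<^sub>m (C * C\<^sup>T))"
proof -
  have Ct: "C\<^sup>T \<in> carrier_mat N m" using C by simp
  have CCt: "C * C\<^sup>T \<in> carrier_mat m m" using C by simp
  have "det (four_block_mat Y C (- C\<^sup>T) (s \<cdot>\<^sub>m 1\<^sub>m N))
      = det (Y - C * ((1 / s) \<cdot>\<^sub>m 1\<^sub>m N) * (- C\<^sup>T)) * det (s \<cdot>\<^sub>m 1\<^sub>m N)"
    by (rule det_schur_complement_lower_right[OF Y C uminus_carrier_mat[OF Ct]])
      (use s in \<open>auto simp: mult_smult_distrib[OF one_carrier_mat one_carrier_mat] smult_smult_mat one_smult_mat\<close>)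
  also have "Y - C * ((1 / s) \<cdot>\<^sub>m 1\<^sub>m N) * (- C\<^sup>T) = Y + (1 / s) \<cdot>\<^sub>m (C * C\<^sup>T)"
    by (simp only: mult_smult_distrib[OF C one_carrier_mat] right_mult_one_mat[OF C]
        mult_smult_assoc_mat[OF C uminus_carrier_mat[OF Ct]] uminus_mult_right_mat)
      (rule eq_matI, use Y CCt in auto)
  finally show ?thesis by simp
qed

lemma bij_betw_shift_pick:
  assumes "finite S"
  shows "bij_betw (\<lambda>i. if i < m then i else m + pick S (i - m)) {0..<m + card S} ({0..<m} \<union> (+) m ` S)"
proof -
  define f where "f i = (if i < m then i else m + pick S (i - m))" for i
  have pick: "bij_betw (pick S) {0..<card S} S" by (rule bij_betw_pick[OF assms])
  then have pickS: "pick S j \<in> S" if "j < card S" for j using that by (auto dest: bij_betw_apply)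
  have "inj_on f {0..<m + card S}"
  proof (rule inj_onI)
    fix i j assume ij: "i \<in> {0..<m + card S}" "j \<in> {0..<m + card S}" and "f i = f j"
    then have "i = j \<or> (\<not> i < m \<and> \<not> j < m \<and> pick S (i - m) = pick S (j - m))"
      by (auto simp: f_def split: if_splits)
    then show "i = j"
    proof (elim disjE conjE)
      assume "\<not> i < m" "\<not> j < m" "pick S (i - m) = pick S (j - m)"
      moreover from this ij have "i - m = j - m"
        using inj_onD[OF bij_betw_imp_inj_on[OF pick], of "i - m" "j - m"] by auto
      ultimately show "i = j" by arith
    qed
  qed
  moreover have "f ` {0..<m + card S} = {0..<m} \<union> (+) m ` S"
  proof
    show "f ` {0..<m + card S} \<subseteq> {0..<m} \<union> (+) m ` S" using pickS by (auto simp: f_def)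
    have "(+) m ` S \<subseteq> f ` {0..<m + card S}"
    proof
      fix x assume "x \<in> (+) m ` S"
      then obtain y where "y \<in> S" "x = m + y" by auto
      moreover obtain j where "j < card S" "y = pick S j"
        using bij_betw_imp_surj_on[OF pick] \<open>y \<in> S\<close> by (metis atLeastLessThan_iff imageE)
      ultimately show "x \<in> f ` {0..<m + card S}" by (intro image_eqI[where x="m + j"]) (simp_all add: f_def)
    qed
    moreover have "{0..<m} \<subseteq> f ` {0..<m + card S}" by (auto simp: f_def intro!: image_eqI)
    ultimately show "{0..<m} \<union> (+) m ` S \<subseteq> f ` {0..<m + card S}" by blast
  qed
  ultimately show ?thesis unfolding f_def[abs_def] by (simp add: bij_betw_def)
qed

lemma principal_minor_four_block_cols:
  fixes Y C :: "'a :: comm_ring_1 mat"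
  assumes Y: "Y \<in> carrier_mat m m" and C: "C \<in> carrier_mat m N" and S: "S \<subseteq> {0..<N}"
  shows "principal_minor (\<lambda>i j. four_block_mat Y C (- C\<^sup>T) (0\<^sub>m N N) $$ (i, j)) ({0..<m} \<union> (+) m ` S)
       = bordered_det Y (submatrix C {0..<m} S)"
proof -
  let ?k = "card S"
  let ?CS = "submatrix C {0..<m} S"
  define f where "f i = (if i < m then i else m + pick S (i - m))" for i
  have finS: "finite S" using S finite_subset by blast
  have f: "bij_betw f {0..<m + ?k} ({0..<m} \<union> (+) m ` S)"
    unfolding f_def[abs_def] by (rule bij_betw_shift_pick[OF finS])
  have CS: "?CS \<in> carrier_mat m ?k" by (rule submatrix_cols_carrier[OF C S])
  have pick_less: "pick S l < N" if "l < ?k" for l using pick_in_set_le[OF that] S by auto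
  have "principal_minor (\<lambda>i j. four_block_mat Y C (- C\<^sup>T) (0\<^sub>m N N) $$ (i, j)) ({0..<m} \<union> (+) m ` S)
      = principal_minor (\<lambda>i j. four_block_mat Y C (- C\<^sup>T) (0\<^sub>m N N) $$ (f i, f j)) {0..<m + ?k}"
    unfolding bij_betw_imp_surj_on[OF f, symmetric] by (rule principal_minor_reindex[OF bij_betw_imp_inj_on[OF f]]) simp
  also have "\<dots> = principal_minor (\<lambda>i j. four_block_mat Y ?CS (- ?CS\<^sup>T) (0\<^sub>m ?k ?k) $$ (i, j)) {0..<m + ?k}"
    by (rule principal_minor_cong) (use Y C CS pick_less submatrix_cols_index[OF C S] in \<open>auto simp: f_def\<close>)
  also have "\<dots> = bordered_det Y ?CS"
    unfolding bordered_det_def using Y CS by (subst det_eq_principal_minor[of _ "m + ?k"]) auto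
  finally show ?thesis .
qed

lemma sum_Pow_supsets_prefix:
  fixes m N :: nat
  shows "(\<Sum>A\<in>{A\<in>Pow {0..<m + N}. {0..<m} \<subseteq> A}. g A) = (\<Sum>S\<in>Pow {0..<N}. g ({0..<m} \<union> (+) m ` S))"
proof -
  have inv: "{0..<m} \<union> (+) m ` {j. m + j \<in> A} = A" if "{0..<m} \<subseteq> A" for A
  proof
    show "A \<subseteq> {0..<m} \<union> (+) m ` {j. m + j \<in> A}"
    proof
      fix x assume "x \<in> A"
      then show "x \<in> {0..<m} \<union> (+) m ` {j. m + j \<in> A}"
        by (cases "x < m") (auto intro!: image_eqI[of x _ "x - m"])
    qed
  qed (use that in auto)
  show ?thesis
    by (rule sum.reindex_bij_witness[of _ "\<lambda>S. {0..<m} \<union> (+) m ` S" "\<lambda>A. {j. m + j \<in> A}"]) (auto simp: inv)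
qed

lemma atLeastLessThan_diff_prefix:
  fixes m N :: nat
  shows "{0..<m + N} - ({0..<m} \<union> (+) m ` S) = (+) m ` ({0..<N} - S)"
proof
  show "{0..<m + N} - ({0..<m} \<union> (+) m ` S) \<subseteq> (+) m ` ({0..<N} - S)"
  proof
    fix x assume "x \<in> {0..<m + N} - ({0..<m} \<union> (+) m ` S)"
    then have x: "m \<le> x" "x < m + N" "x \<notin> (+) m ` S" by auto
    then have "x - m \<in> {0..<N} - S" using image_eqI[of x "(+) m" "x - m" S] by auto
    then show "x \<in> (+) m ` ({0..<N} - S)" using x(1) by (auto intro!: image_eqI[of x _ "x - m"])
  qed
qed auto

text \<open>Expanding along the diagonal of the lower right block \<open>s 1\<close>: the principal minors containing all of
  the first \<open>m\<close> indices are bordered determinants of column submatrices of \<open>C\<close>; the others pick up a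
  factor \<open>0\<close> from the upper left diagonal.\<close>

lemma det_four_block_smult_one_expand:
  fixes Y C :: "'a :: comm_ring_1 mat"
  assumes Y: "Y \<in> carrier_mat m m" and C: "C \<in> carrier_mat m N"
  shows "det (four_block_mat Y C (- C\<^sup>T) (s \<cdot>\<^sub>m 1\<^sub>m N))
       = (\<Sum>S\<in>Pow {0..<N}. s ^ (N - card S) * bordered_det Y (submatrix C {0..<m} S))"
proof -
  let ?K0 = "\<lambda>i j. four_block_mat Y C (- C\<^sup>T) (0\<^sub>m N N) $$ (i, j)"
  let ?z = "\<lambda>i. if i < m then 0 else s"
  let ?I = "{0..<m + N}"
  have "det (four_block_mat Y C (- C\<^sup>T) (s \<cdot>\<^sub>m 1\<^sub>m N))
      = principal_minor (\<lambda>i j. (if i = j then ?z i else 0) + ?K0 i j) ?I"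
    using Y C by (subst det_eq_principal_minor[of _ "m + N"]) (auto intro!: principal_minor_cong)
  also have "\<dots> = (\<Sum>A\<in>Pow ?I. (\<Prod>i\<in>?I - A. ?z i) * principal_minor ?K0 A)"
    by (rule principal_minor_diag_add) simp
  also have "\<dots> = (\<Sum>A\<in>{A\<in>Pow ?I. {0..<m} \<subseteq> A}. (\<Prod>i\<in>?I - A. ?z i) * principal_minor ?K0 A)"
  proof (rule sum.mono_neutral_right)
    show "\<forall>A\<in>Pow ?I - {A\<in>Pow ?I. {0..<m} \<subseteq> A}. (\<Prod>i\<in>?I - A. ?z i) * principal_minor ?K0 A = 0"
    proof
      fix A assume "A \<in> Pow ?I - {A\<in>Pow ?I. {0..<m} \<subseteq> A}"
      then obtain i where "i \<in> {0..<m}" "i \<notin> A" by blast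
      then show "(\<Prod>i\<in>?I - A. ?z i) * principal_minor ?K0 A = 0"
        by (subst prod_zero) (auto intro!: bexI[of _ i])
    qed
  qed auto
  also have "\<dots> = (\<Sum>S\<in>Pow {0..<N}. s ^ (N - card S) * bordered_det Y (submatrix C {0..<m} S))"
    unfolding sum_Pow_supsets_prefix atLeastLessThan_diff_prefix
    by (intro sum.cong refl) (auto simp: prod.reindex card_Diff_subset finite_subset principal_minor_four_block_cols[OF Y C])
  finally show ?thesis .
qed

lemma sum_coeffs_eq_if_sum_powers_eq:
  fixes a :: "'x \<Rightarrow> 'a :: {idom, ring_char_0}" and c :: "'y \<Rightarrow> 'a"
  assumes F: "finite F" and H: "finite H"
    and eq: "\<And>t. t \<noteq> 0 \<Longrightarrow> (\<Sum>x\<in>F. t ^ g x * a x) = (\<Sum>y\<in>H. t ^ h y * c y)"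
  shows "(\<Sum>x\<in>{x\<in>F. g x = k}. a x) = (\<Sum>y\<in>{y\<in>H. h y = k}. c y)"
proof -
  define P where "P = (\<Sum>x\<in>F. monom (a x) (g x)) - (\<Sum>y\<in>H. monom (c y) (h y))"
  have "poly P t = (\<Sum>x\<in>F. t ^ g x * a x) - (\<Sum>y\<in>H. t ^ h y * c y)" for t
    unfolding P_def by (simp add: poly_sum poly_monom mult.commute)
  then have "{t. t \<noteq> 0} \<subseteq> {t. poly P t = 0}" using eq by auto
  moreover have "infinite {t :: 'a. t \<noteq> 0}"
  proof
    assume "finite {t :: 'a. t \<noteq> 0}"
    then have "finite (insert 0 {t :: 'a. t \<noteq> 0})" by simp
    moreover have "insert 0 {t :: 'a. t \<noteq> 0} = UNIV" by auto
    ultimately show False using infinite_UNIV_char_0[where 'a='a] by simp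
  qed
  ultimately have "P = 0" using poly_roots_finite finite_subset by blast
  then have "coeff P k = 0" by simp
  then show ?thesis
    unfolding P_def by (simp add: coeff_sum coeff_monom sum.inter_filter[OF F] sum.inter_filter[OF H])
qed

text \<open>Comparing the coefficients of \<open>t\<^sup>k\<close> in \<open>det (Y + t C C\<^sup>T) = det (Y + t diag b)\<close>, expanded once via the
  bordered matrix \<open>[[Y, C], [-C\<^sup>T, 1 / t]]\<close> and once via principal minors of \<open>Y\<close>.\<close>

lemma sum_bordered_det_submatrix:
  fixes Y C :: "'a :: {field, ring_char_0} mat"
  assumes Y: "Y \<in> carrier_mat m m" and C: "C \<in> carrier_mat m N" and CC: "C * C\<^sup>T = mat_diag m b"
    and k: "k \<le> m"
  shows "(\<Sum>S\<in>nsets {0..<N} k. bordered_det Y (submatrix C {0..<m} S))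
       = (\<Sum>A\<in>nsets {..<m} (m - k). (\<Prod>i\<in>{..<m} - A. b i) * principal_minor (\<lambda>i j. Y $$ (i, j)) A)"
proof -
  have "(\<Sum>S\<in>{S\<in>Pow {0..<N}. card S = k}. bordered_det Y (submatrix C {0..<m} S))
      = (\<Sum>A\<in>{A\<in>Pow {..<m}. m - card A = k}. (\<Prod>i\<in>{..<m} - A. b i) * principal_minor (\<lambda>i j. Y $$ (i, j)) A)"
  proof (rule sum_coeffs_eq_if_sum_powers_eq)
    fix t :: 'a assume t: "t \<noteq> 0"
    have "det (four_block_mat Y C (- C\<^sup>T) ((1 / t) \<cdot>\<^sub>m 1\<^sub>m N)) = (1 / t) ^ N * det (Y + t \<cdot>\<^sub>m mat_diag m b)"
      using det_four_block_smult_one[OF Y C, of "1 / t"] t CC by simp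
    then have "det (Y + t \<cdot>\<^sub>m mat_diag m b) = t ^ N * det (four_block_mat Y C (- C\<^sup>T) ((1 / t) \<cdot>\<^sub>m 1\<^sub>m N))"
      using t by (simp add: power_divide)
    also have "\<dots> = (\<Sum>S\<in>Pow {0..<N}. t ^ N * (1 / t) ^ (N - card S) * bordered_det Y (submatrix C {0..<m} S))"
      by (simp only: det_four_block_smult_one_expand[OF Y C] sum_distrib_left mult.assoc)
    also have "\<dots> = (\<Sum>S\<in>Pow {0..<N}. t ^ card S * bordered_det Y (submatrix C {0..<m} S))"
    proof (rule sum.cong[OF refl])
      fix S assume "S \<in> Pow {0..<N}"
      then have "card S \<le> N" using card_mono[of "{0..<N}" S] by simp
      then have "t ^ N * (1 / t) ^ (N - card S) = t ^ card S"
        using t by (simp add: power_diff power_divide)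
      then show "t ^ N * (1 / t) ^ (N - card S) * bordered_det Y (submatrix C {0..<m} S)
          = t ^ card S * bordered_det Y (submatrix C {0..<m} S)" by simp
    qed
    finally show "(\<Sum>S\<in>Pow {0..<N}. t ^ card S * bordered_det Y (submatrix C {0..<m} S))
        = (\<Sum>A\<in>Pow {..<m}. t ^ (m - card A) * ((\<Prod>i\<in>{..<m} - A. b i) * principal_minor (\<lambda>i j. Y $$ (i, j)) A))"
      by (simp add: det_add_smult_diag[OF Y])
  qed auto
  moreover have "{S\<in>Pow {0..<N}. card S = k} = nsets {0..<N} k"
    by (auto simp: nsets_def intro: finite_subset)
  moreover have "{A\<in>Pow {..<m}. m - card A = k} = nsets {..<m} (m - k)"
  proof -
    have "m - card A = k \<longleftrightarrow> card A = m - k" if "A \<subseteq> {..<m}" for A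
      using card_mono[OF finite_lessThan that] k by auto
    then show ?thesis by (auto simp: nsets_def intro: finite_subset)
  qed
  ultimately show ?thesis by simp
qed

section \<open>The Moore--Penrose pseudoinverse\<close>

lemma penrose_left_eq:
  fixes M :: "'a :: comm_ring_1 mat"
  assumes M: "M \<in> carrier_mat r c" and X: "X \<in> carrier_mat c r" and Y: "Y \<in> carrier_mat c r"
    and x2: "X * M * X = X" and x3: "(M * X)\<^sup>T = M * X" and y1: "M * Y * M = M" and y3: "(M * Y)\<^sup>T = M * Y"
  shows "X = X * (M * Y)"
proof -
  have Mt: "M\<^sup>T \<in> carrier_mat c r" and Xt: "X\<^sup>T \<in> carrier_mat r c" and Yt: "Y\<^sup>T \<in> carrier_mat r c"
    using M X Y by auto
  have MX: "M * X \<in> carrier_mat r r" and MY: "M * Y \<in> carrier_mat r r" using M X Y by auto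
  have tMX: "(M * X)\<^sup>T = X\<^sup>T * M\<^sup>T" and tMY: "(M * Y)\<^sup>T = Y\<^sup>T * M\<^sup>T"
    by (rule transpose_mult[OF M X], rule transpose_mult[OF M Y])
  have Mt_Y: "M\<^sup>T = M\<^sup>T * Y\<^sup>T * M\<^sup>T"
  proof -
    have "M\<^sup>T = (M * Y * M)\<^sup>T" using y1 by simp
    also have "\<dots> = M\<^sup>T * (Y\<^sup>T * M\<^sup>T)" by (simp only: transpose_mult[OF MY M] tMY)
    finally show ?thesis using Mt Yt by simp
  qed
  have "X = X * (M * X)" using x2 M X by simp
  also have "\<dots> = X * (X\<^sup>T * (M\<^sup>T * Y\<^sup>T * M\<^sup>T))" using x3 tMX Mt_Y by simp
  also have "\<dots> = X * ((X\<^sup>T * M\<^sup>T) * (Y\<^sup>T * M\<^sup>T))"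
    using assoc_mult_mat[OF Mt Yt Mt] assoc_mult_mat[OF Xt Mt mult_carrier_mat[OF Yt Mt]] by simp
  also have "\<dots> = X * ((M * X) * (M * Y))" using x3 y3 tMX tMY by simp
  also have "\<dots> = (X * M * X) * (M * Y)" by (simp only: assoc_mult_mat[OF X M X] assoc_mult_mat[OF X MX MY])
  finally show ?thesis using x2 by simp
qed

lemma penrose_right_eq:
  fixes M :: "'a :: comm_ring_1 mat"
  assumes M: "M \<in> carrier_mat r c" and X: "X \<in> carrier_mat c r" and Y: "Y \<in> carrier_mat c r"
    and x1: "M * X * M = M" and x4: "(X * M)\<^sup>T = X * M" and y2: "Y * M * Y = Y" and y4: "(Y * M)\<^sup>T = Y * M"
  shows "Y = X * (M * Y)"
proof -
  have Mt: "M\<^sup>T \<in> carrier_mat c r" and Xt: "X\<^sup>T \<in> carrier_mat r c" and Yt: "Y\<^sup>T \<in> carrier_mat r c"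
    using M X Y by auto
  have MX: "M * X \<in> carrier_mat r r" and MY: "M * Y \<in> carrier_mat r r"
    and XM: "X * M \<in> carrier_mat c c" and YM: "Y * M \<in> carrier_mat c c" using M X Y by auto
  have tXM: "(X * M)\<^sup>T = M\<^sup>T * X\<^sup>T" and tYM: "(Y * M)\<^sup>T = M\<^sup>T * Y\<^sup>T"
    by (rule transpose_mult[OF X M], rule transpose_mult[OF Y M])
  have Mt_X: "M\<^sup>T = M\<^sup>T * X\<^sup>T * M\<^sup>T"
  proof -
    have "M\<^sup>T = (M * X * M)\<^sup>T" using x1 by simp
    also have "\<dots> = M\<^sup>T * (X\<^sup>T * M\<^sup>T)" by (simp only: transpose_mult[OF MX M] transpose_mult[OF M X])
    finally show ?thesis using Mt Xt by simp
  qed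
  have "Y = (Y * M) * Y" using y2 M Y by simp
  also have "\<dots> = ((M\<^sup>T * X\<^sup>T * M\<^sup>T) * Y\<^sup>T) * Y" using y4 tYM Mt_X by simp
  also have "\<dots> = ((M\<^sup>T * X\<^sup>T) * (M\<^sup>T * Y\<^sup>T)) * Y"
    using assoc_mult_mat[OF mult_carrier_mat[OF Mt Xt] Mt Yt] by simp
  also have "\<dots> = ((X * M) * (Y * M)) * Y" using x4 y4 tXM tYM by simp
  also have "\<dots> = (X * M) * (Y * M * Y)" by (simp only: assoc_mult_mat[OF XM YM Y] assoc_mult_mat[OF Y M Y])
  finally show ?thesis by (simp only: y2 assoc_mult_mat[OF X M Y])
qed

lemma pinv_eqI:
  fixes M :: "real mat"
  assumes M: "M \<in> carrier_mat r c" and X: "X \<in> carrier_mat c r"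
    and "M * X * M = M" "X * M * X = X" "(M * X)\<^sup>T = M * X" "(X * M)\<^sup>T = X * M"
  shows "pinv M = X"
  unfolding pinv_def
proof (rule the_equality)
  fix Y assume "Y \<in> carrier_mat (dim_col M) (dim_row M) \<and> M * Y * M = M \<and> Y * M * Y = Y \<and>
      (M * Y)\<^sup>T = M * Y \<and> (Y * M)\<^sup>T = Y * M"
  then show "Y = X"
    using assms penrose_left_eq[OF M X, of Y] penrose_right_eq[OF M X, of Y] by auto
qed (use assms in simp)

lemma pinv_full_column_rank:
  fixes M :: "real mat"
  assumes M: "M \<in> carrier_mat r c" and W: "W \<in> carrier_mat c c"
    and left: "W * (M\<^sup>T * M) = 1\<^sub>m c" and right: "(M\<^sup>T * M) * W = 1\<^sub>m c"
  shows "pinv M = W * M\<^sup>T"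
proof -
  have Mt: "M\<^sup>T \<in> carrier_mat c r" using M by simp
  have MtM: "M\<^sup>T * M \<in> carrier_mat c c" using M by simp
  have Wt: "W\<^sup>T \<in> carrier_mat c c" using W by simp
  have X: "W * M\<^sup>T \<in> carrier_mat c r" using W Mt by simp
  have sym: "(M\<^sup>T * M)\<^sup>T = M\<^sup>T * M" by (simp only: transpose_mult[OF Mt M] transpose_transpose)
  have "W\<^sup>T = W\<^sup>T * ((M\<^sup>T * M) * W)" by (simp only: right right_mult_one_mat[OF Wt])
  also have "\<dots> = (W\<^sup>T * (M\<^sup>T * M)) * W" by (rule assoc_mult_mat[OF Wt MtM W, symmetric])
  also have "W\<^sup>T * (M\<^sup>T * M) = 1\<^sub>m c"
    by (subst sym[symmetric], subst transpose_mult[OF MtM W, symmetric]) (simp only: right transpose_one)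
  finally have W_sym: "W\<^sup>T = W" by (simp only: left_mult_one_mat[OF W])
  have WM: "W * M\<^sup>T * M = 1\<^sub>m c" by (simp only: assoc_mult_mat[OF W Mt M] left)
  show ?thesis
  proof (rule pinv_eqI[OF M X])
    show "M * (W * M\<^sup>T) * M = M" by (simp only: assoc_mult_mat[OF M X M] WM right_mult_one_mat[OF M])
    show "W * M\<^sup>T * M * (W * M\<^sup>T) = W * M\<^sup>T" by (simp only: WM left_mult_one_mat[OF X])
    show "(W * M\<^sup>T * M)\<^sup>T = W * M\<^sup>T * M" by (simp only: WM transpose_one)
    show "(M * (W * M\<^sup>T))\<^sup>T = M * (W * M\<^sup>T)"
      by (simp only: transpose_mult[OF M X] transpose_mult[OF W Mt] transpose_transpose W_sym
          assoc_mult_mat[OF M W Mt])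
  qed
qed

section \<open>Factoring \<open>B\<close> through an orthonormal basis of its range\<close>

locale gram_factorization =
  fixes B U :: "real mat" and n dB m :: nat and b :: "nat \<Rightarrow> real"
  assumes B: "B \<in> carrier_mat n dB" and U: "U \<in> carrier_mat n m"
    and UU: "U\<^sup>T * U = 1\<^sub>m m" and BB: "B * B\<^sup>T = U * mat_diag m b * U\<^sup>T" and b_pos: "\<forall>i<m. b i > 0"
begin

definition C :: "real mat" where "C = U\<^sup>T * B"

lemma dims [simp]: "dim_row B = n" "dim_col B = dB" "dim_row U = n" "dim_col U = m"
  "dim_row C = m" "dim_col C = dB"
  using B U by (auto simp: C_def)

lemma C_transpose: "C\<^sup>T = B\<^sup>T * U"
  by (simp add: C_def transpose_mult_mat)

lemma C_carrier: "C \<in> carrier_mat m dB" by auto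

lemma UtU_mult: "dim_row X = m \<Longrightarrow> U\<^sup>T * (U * X) = X"
  using UU by (simp add: mult_assoc_mat[symmetric])

lemma BBt_mult: "dim_row X = n \<Longrightarrow> B * (B\<^sup>T * X) = U * (mat_diag m b * (U\<^sup>T * X))"
  by (simp add: mult_assoc_mat[symmetric] BB)

lemma C_mult_C_transpose: "C * C\<^sup>T = mat_diag m b"
  by (simp add: C_def transpose_mult_mat mult_assoc_mat BBt_mult UtU_mult UU)

text \<open>\<open>E = B - U C\<close> satisfies \<open>E B\<^sup>T = 0\<close> because \<open>U U\<^sup>T\<close> is the identity on the range of \<open>B B\<^sup>T\<close>; hence
  \<open>E E\<^sup>T = 0\<close>.\<close>

lemma B_eq: "B = U * C"
proof -
  let ?E = "B - U * C"
  have UC: "U * C \<in> carrier_mat n dB" using U C_carrier by simp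
  have E: "?E \<in> carrier_mat n dB" by (rule minus_carrier_mat[OF UC])
  have "U * C * B\<^sup>T = B * B\<^sup>T"
    by (simp add: C_def mult_assoc_mat BB BBt_mult UtU_mult)
  then have EBt: "?E * B\<^sup>T = 0\<^sub>m n n"
    using B by (simp add: minus_mult_distrib_mat[OF B UC, of "B\<^sup>T" n])
  have "?E * ?E\<^sup>T = ?E * B\<^sup>T - ?E * (B\<^sup>T * (U * U\<^sup>T))"
    using B U E
    by (simp add: transpose_minus[OF B UC] mult_minus_distrib_mat[OF E, of "B\<^sup>T" n] transpose_mult_mat
        C_transpose mult_assoc_mat)
  also have "?E * (B\<^sup>T * (U * U\<^sup>T)) = 0\<^sub>m n n"
    using E B U by (simp add: mult_assoc_mat[of ?E, symmetric] EBt)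
  finally have "?E * ?E\<^sup>T = 0\<^sub>m n n" using EBt by simp
  then have "?E = 0\<^sub>m n dB" by (rule mult_transpose_self_eq_0D[OF E])
  then show ?thesis
    using B UC by (metis minus_add_cancel_mat left_add_zero_mat)
qed

definition D_inv :: "real mat" where "D_inv = mat_diag m (\<lambda>i. 1 / b i)"

lemma D_inv_dims [simp]: "dim_row D_inv = m" "dim_col D_inv = m" and D_inv_transpose [simp]: "D_inv\<^sup>T = D_inv"
  by (simp_all add: D_inv_def)

lemma D_D_inv: "mat_diag m b * D_inv = 1\<^sub>m m"
  unfolding D_inv_def mat_diag_diag using b_pos by (intro eq_matI) (auto simp: mat_diag_def)

lemma C_mult_C_transpose_D_inv: "dim_row X = m \<Longrightarrow> C * (C\<^sup>T * (D_inv * X)) = X"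
  by (simp add: mult_assoc_mat[symmetric] C_mult_C_transpose D_D_inv)

lemma pinv_B: "pinv B = C\<^sup>T * (D_inv * U\<^sup>T)"
proof (rule pinv_eqI[OF B])
  show "C\<^sup>T * (D_inv * U\<^sup>T) \<in> carrier_mat dB n" by (intro carrier_matI) simp_all
  have BX: "B * (C\<^sup>T * (D_inv * U\<^sup>T)) = U * U\<^sup>T"
    by (subst B_eq) (simp add: mult_assoc_mat C_mult_C_transpose_D_inv)
  have XB: "C\<^sup>T * (D_inv * U\<^sup>T) * B = C\<^sup>T * (D_inv * C)"
    by (subst B_eq) (simp add: mult_assoc_mat UtU_mult)
  show "B * (C\<^sup>T * (D_inv * U\<^sup>T)) * B = B"
    unfolding BX by (subst (1 2) B_eq) (simp add: mult_assoc_mat UtU_mult)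
  show "C\<^sup>T * (D_inv * U\<^sup>T) * B * (C\<^sup>T * (D_inv * U\<^sup>T)) = C\<^sup>T * (D_inv * U\<^sup>T)"
    unfolding XB by (simp add: mult_assoc_mat C_mult_C_transpose_D_inv)
  show "(B * (C\<^sup>T * (D_inv * U\<^sup>T)))\<^sup>T = B * (C\<^sup>T * (D_inv * U\<^sup>T))"
    unfolding BX by (simp add: transpose_mult_mat)
  show "(C\<^sup>T * (D_inv * U\<^sup>T) * B)\<^sup>T = C\<^sup>T * (D_inv * U\<^sup>T) * B"
    unfolding XB by (simp add: transpose_mult_mat mult_assoc_mat)
qed

lemma B_mult_pinv_B: "B * pinv B = U * U\<^sup>T"
  by (subst B_eq) (simp add: pinv_B mult_assoc_mat C_mult_C_transpose_D_inv)

lemma colsub_B: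
  assumes "S \<subseteq> {0..<dB}"
  shows "colsub B S = U * submatrix C {0..<m} S"
  using submatrix_cols_mult[OF U C_carrier assms] unfolding B_eq[symmetric] by (simp add: colsub_def)

lemma colsub_gram:
  assumes "S \<subseteq> {0..<dB}"
  shows "(colsub B S)\<^sup>T * colsub B S = (submatrix C {0..<m} S)\<^sup>T * submatrix C {0..<m} S"
  using submatrix_cols_carrier[OF C_carrier assms]
  by (simp add: colsub_B[OF assms] transpose_mult_mat mult_assoc_mat UtU_mult)

lemma colsub_mult_pinv:
  assumes S: "S \<subseteq> {0..<dB}" and W: "W \<in> carrier_mat (card S) (card S)"
    and W_inv: "W * ((submatrix C {0..<m} S)\<^sup>T * submatrix C {0..<m} S) = 1\<^sub>m (card S)"
      "(submatrix C {0..<m} S)\<^sup>T * submatrix C {0..<m} S * W = 1\<^sub>m (card S)"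
  shows "colsub B S * pinv (colsub B S) = U * (submatrix C {0..<m} S * W * (submatrix C {0..<m} S)\<^sup>T) * U\<^sup>T"
proof -
  have CS: "submatrix C {0..<m} S \<in> carrier_mat m (card S)" by (rule submatrix_cols_carrier[OF C_carrier S])
  then have BS: "colsub B S \<in> carrier_mat n (card S)" by (auto simp: colsub_B[OF S])
  have "pinv (colsub B S) = W * (colsub B S)\<^sup>T"
    by (rule pinv_full_column_rank[OF BS W]) (simp_all add: colsub_gram[OF S] W_inv)
  then show ?thesis using CS W by (simp add: colsub_B[OF S] transpose_mult_mat mult_assoc_mat)
qed

text \<open>Both sides vanish if \<open>C\<^sub>S\<close> is rank deficient; otherwise \<open>B\<^sub>S B\<^sub>S\<^sup>\<dagger> = U P U\<^sup>T\<close> with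
  \<open>P = C\<^sub>S (C\<^sub>S\<^sup>T C\<^sub>S)\<^sup>-\<^sup>1 C\<^sub>S\<^sup>T\<close>.\<close>

lemma Pk_summand_eq:
  assumes A: "A \<in> carrier_mat n d" and S: "S \<subseteq> {0..<dB}" and x: "x \<noteq> 0"
  shows "x ^ m * (det ((colsub B S)\<^sup>T * colsub B S) *
           det (x \<cdot>\<^sub>m 1\<^sub>m d - (B * pinv B * A)\<^sup>T * (1\<^sub>m n - colsub B S * pinv (colsub B S)) * (B * pinv B * A)))
       = x ^ d * x ^ card S * bordered_det (x \<cdot>\<^sub>m 1\<^sub>m m - U\<^sup>T * A * A\<^sup>T * U) (submatrix C {0..<m} S)"
proof -
  let ?CS = "submatrix C {0..<m} S"
  let ?k = "card S"
  define G where "G = U\<^sup>T * A"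
  have CS: "?CS \<in> carrier_mat m ?k" by (rule submatrix_cols_carrier[OF C_carrier S])
  have G: "G \<in> carrier_mat m d" using A by (auto simp: G_def)
  have M: "U\<^sup>T * A * A\<^sup>T * U = G * G\<^sup>T"
    using A by (simp add: G_def transpose_mult_mat mult_assoc_mat)
  have BpA: "B * pinv B * A = U * G"
    using A by (simp add: B_mult_pinv_B G_def mult_assoc_mat)
  show ?thesis
  proof (cases "det (?CS\<^sup>T * ?CS) = 0")
    case True
    have "x \<cdot>\<^sub>m 1\<^sub>m m - G * G\<^sup>T \<in> carrier_mat m m" using G by (intro minus_carrier_mat) simp
    with True show ?thesis unfolding M colsub_gram[OF S] by (simp add: bordered_det_eq_0[OF _ CS])
  next
    case False
    have "?CS\<^sup>T * ?CS \<in> carrier_mat ?k ?k" using CS by simp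
    then obtain W where W: "W \<in> carrier_mat ?k ?k" "W * (?CS\<^sup>T * ?CS) = 1\<^sub>m ?k" "(?CS\<^sup>T * ?CS) * W = 1\<^sub>m ?k"
      using det_non_zero_imp_unit[OF _ False] by (auto simp: Units_def ring_mat_simps)
    have P: "?CS * W * ?CS\<^sup>T \<in> carrier_mat m m" using CS W by simp
    have "(B * pinv B * A)\<^sup>T * (1\<^sub>m n - colsub B S * pinv (colsub B S)) * (B * pinv B * A)
        = G\<^sup>T * ((1\<^sub>m m - ?CS * W * ?CS\<^sup>T) * G)"
      unfolding BpA colsub_mult_pinv[OF S W] using orthonormal_sandwich[OF U UU G P] G P CS W(1)
      by (simp add: mult_assoc_mat)
    then show ?thesis
      unfolding M colsub_gram[OF S] using det_sub_projection_eq_bordered_det[OF G CS W(1,2) x] by simp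
  qed
qed

lemma Pk_projection_eq:
  assumes A: "A \<in> carrier_mat n d" and x: "x \<noteq> 0" and k: "k \<le> m"
  shows "x ^ m * Pk k x (B * pinv B * A) B = x ^ (d + k) *
    (\<Sum>S\<in>nsets {..<m} (m - k). (\<Prod>i\<in>{..<m} - S. b i) * principal_minor (\<lambda>i j. (x \<cdot>\<^sub>m 1\<^sub>m m - U\<^sup>T * A * A\<^sup>T * U) $$ (i, j)) S)"
proof -
  let ?Y = "x \<cdot>\<^sub>m 1\<^sub>m m - U\<^sup>T * A * A\<^sup>T * U"
  have Y: "?Y \<in> carrier_mat m m" using A by (intro minus_carrier_mat) auto
  have cols: "{S. S \<subseteq> {0..<dB} \<and> card S = k} = nsets {0..<dB} k"
    by (auto simp: nsets_def intro: finite_subset)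
  have "x ^ m * Pk k x (B * pinv B * A) B
      = (\<Sum>S\<in>nsets {0..<dB} k. x ^ d * x ^ k * bordered_det ?Y (submatrix C {0..<m} S))"
    unfolding Pk_def dims cols sum_distrib_left using A
    by (intro sum.cong refl) (auto simp: nsets_def Pk_summand_eq[OF A _ x])
  also have "\<dots> = x ^ (d + k) * (\<Sum>S\<in>nsets {0..<dB} k. bordered_det ?Y (submatrix C {0..<m} S))"
    by (simp add: sum_distrib_left power_add)
  also have "\<dots> = x ^ (d + k) * (\<Sum>S\<in>nsets {..<m} (m - k). (\<Prod>i\<in>{..<m} - S. b i) * principal_minor (\<lambda>i j. ?Y $$ (i, j)) S)"
    by (simp add: sum_bordered_det_submatrix[OF Y C_carrier C_mult_C_transpose k])
  finally show ?thesis .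
qed

end

theorem proposition5p1:
  fixes A B U :: "real mat" and n d dB m k :: nat and b :: "nat \<Rightarrow> real"
  assumes A: "A \<in> carrier_mat n d"
    and B: "B \<in> carrier_mat n dB"
    and rk: "vec_space.rank n (B :: real mat) = m"
    and U: "U \<in> carrier_mat n m"
    and UU: "U\<^sup>T * U = 1\<^sub>m m"
    and BB: "B * B\<^sup>T = U * mat_diag m b * U\<^sup>T"
    and bpos: "\<forall>i<m. b i > 0"
    and k: "1 \<le> k" "k \<le> m"
  shows "(\<forall>z. hk m b k z =
            fact k * (\<Sum>S \<in> {S. S \<subseteq> {0..<m} \<and> card S = m - k}.
                        (\<Prod>i \<in> {0..<m} - S. b i) * (\<Prod>i \<in> S. z i)))
       \<and> (\<forall>x::real. x \<noteq> 0 \<longrightarrow>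
            Pk k x (B * pinv B * A) B =
              x powi (int d + int k - int m) / fact k *
              mixd m (\<lambda>z. hk m b k z * det (mat_diag m z - U\<^sup>T * A * A\<^sup>T * U))
                     (\<lambda>i. x / 2))"
proof -
  have subsets: "{S. S \<subseteq> {0..<m} \<and> card S = m - k} = nsets {..<m} (m - k)"
    by (auto simp: nsets_def atLeast0LessThan intro: finite_subset[OF _ finite_lessThan])
  have M: "U\<^sup>T * A * A\<^sup>T * U \<in> carrier_mat m m" by (rule carrier_matI) (use A U in auto)
  interpret gram_factorization B U n dB m b
    using B U UU BB bpos by unfold_locales
  define T where "T x = (\<Sum>S\<in>nsets {..<m} (m - k).
    (\<Prod>i\<in>{..<m} - S. b i) * principal_minor (\<lambda>i j. (x \<cdot>\<^sub>m 1\<^sub>m m - U\<^sup>T * A * A\<^sup>T * U) $$ (i, j)) S)" for x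
  have "Pk k x (B * pinv B * A) B = x powi (int d + int k - int m) / fact k *
      mixd m (\<lambda>z. hk m b k z * det (mat_diag m z - U\<^sup>T * A * A\<^sup>T * U)) (\<lambda>i. x / 2)" if x: "x \<noteq> 0" for x
  proof -
    have "x ^ m * Pk k x (B * pinv B * A) B = x ^ (d + k) * T x"
      unfolding T_def by (rule Pk_projection_eq[OF A x k(2)])
    then have "Pk k x (B * pinv B * A) B = x ^ (d + k) / x ^ m * T x"
      using x by (simp add: field_simps)
    moreover have "mixd m (\<lambda>z. hk m b k z * det (mat_diag m z - U\<^sup>T * A * A\<^sup>T * U)) (\<lambda>i. x / 2) = fact k * T x"
      unfolding T_def by (rule mixd_hk_mult_det_diag_sub[OF M k(2)])
    moreover have "x powi (int d + int k - int m) = x ^ (d + k) / x ^ m"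
      using x by (simp add: power_int_diff flip: of_nat_add)
    ultimately show ?thesis by simp
  qed
  moreover have "hk m b k z = fact k * (\<Sum>S \<in> {S. S \<subseteq> {0..<m} \<and> card S = m - k}.
      (\<Prod>i \<in> {0..<m} - S. b i) * (\<Prod>i \<in> S. z i))" for z
    unfolding subsets unfolding atLeast0LessThan by (rule hk_eq[OF k(2)])
  ultimately show ?thesis by blast
qed

end
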